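(* Assume the hypotheses of Lemma 3 and let $\mu=\mu^{\omega^0}$ be the infinite-volume limit measure. There exist constants $C,c>0$ such that for all finite disjoint sets $W,U\subset V$ and all events $A\in\mathcal F_W$, $B\in\mathcal F_U$ which are of polymer type (with supporting sets $W$ and $U$ respectively), $$|\mu(A\cap B)-\mu(A)\mu(B)|\le \exp\bigl(C|W|e^{-c\,\mathrm{dist}(W,U)}\bigr)-1,$$ where $\mathrm{dist}$ is the graph distance between the sets.
   Context: $\mathcal T^d=(V,E)$ is the Cayley tree of order $d$; $p$-SOS model with spins in $\mathbb Z$; $\mathcal F_W$ is the $\sigma$-algebra generated by $(\sigma_v)_{v\in W}$. The inner boundary of $W$ is the set of vertices of $W$ having a neighbour outside $W$. An event $A\in\mathcal F_W$ is of polymer type with supporting set $W$ (relative to $\omega^0$) if $\omega\in A$ implies $\omega_v=\omega^0_v$ for every $v$ in the inner boundary of $W$. The hypotheses of Lemma 3: $\omega^0\in\mathbb Z^V$ and $\beta>0$ satisfy $\beta(H(\omega)-H(\omega^0))\ge\eta\sum_v|\omega_v-\omega^0_v|^p$ for all $\omega$ differing from $\omega^0$ at finitely many sites, with $\eta\ge\eta_1(d,p)$ large enough; $\mu^{\omega^0}$ is the weak limit of the finite-volume Gibbs measures with boundary condition $\omega^0$. *)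

theory Defs
  imports "HOL-Probability.Probability"
begin

text \<open>Vertices are words: the root is the empty list; the root has the d+1 children
  [0],...,[d]; every other vertex xs has the d children xs@[0],...,xs@[d-1].
  Hence every vertex has exactly d+1 neighbours.\<close>

definition tree_V :: "nat \<Rightarrow> nat list set" where
  "tree_V d = {xs. (xs \<noteq> [] \<longrightarrow> hd xs \<le> d) \<and> (\<forall>x\<in>set (tl xs). x < d)}"

definition tree_adj :: "nat \<Rightarrow> nat list \<Rightarrow> nat list \<Rightarrow> bool" where
  "tree_adj d x y \<longleftrightarrow> x \<in> tree_V d \<and> y \<in> tree_V d \<and> (\<exists>i. y = x @ [i] \<or> x = y @ [i])"

text \<open>Each (undirected) edge, represented once as a (parent, child) pair.\<close>
definition tree_edges :: "nat \<Rightarrow> (nat list \<times> nat list) set" where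
  "tree_edges d = {(x, y). x \<in> tree_V d \<and> y \<in> tree_V d \<and> (\<exists>i. y = x @ [i])}"

definition gdist :: "nat \<Rightarrow> nat list \<Rightarrow> nat list \<Rightarrow> nat" where
  "gdist d x y = (LEAST n. (x, y) \<in> {(a, b). tree_adj d a b} ^^ n)"

definition set_dist :: "nat \<Rightarrow> nat list set \<Rightarrow> nat list set \<Rightarrow> nat" where
  "set_dist d W U = Min {gdist d x y | x y. x \<in> W \<and> y \<in> U}"

definition ball :: "nat \<Rightarrow> nat \<Rightarrow> nat list set" where
  "ball d n = {v \<in> tree_V d. length v \<le> n}"

definition config_space :: "nat \<Rightarrow> (nat list \<Rightarrow> int) set" where
  "config_space d = PiE (tree_V d) (\<lambda>_. UNIV)"

definition config_M :: "nat \<Rightarrow> (nat list \<Rightarrow> int) measure" where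
  "config_M d = PiM (tree_V d) (\<lambda>_. count_space UNIV)"

definition F_sets :: "nat \<Rightarrow> nat list set \<Rightarrow> (nat list \<Rightarrow> int) set set" where
  "F_sets d W = {A. \<exists>B. A = {\<omega> \<in> config_space d. restrict \<omega> W \<in> B}}"

definition inner_boundary :: "nat \<Rightarrow> nat list set \<Rightarrow> nat list set" where
  "inner_boundary d W = {v \<in> W. \<exists>u. tree_adj d v u \<and> u \<notin> W}"

definition polymer_event ::
  "nat \<Rightarrow> (nat list \<Rightarrow> int) \<Rightarrow> nat list set \<Rightarrow> (nat list \<Rightarrow> int) set \<Rightarrow> bool" where
  "polymer_event d \<omega>0 W A \<longleftrightarrow>
     A \<in> F_sets d W \<and> (\<forall>\<omega>\<in>A. \<forall>v\<in>inner_boundary d W. \<omega> v = \<omega>0 v)"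

text \<open>H(omega) - H(omega0) = sum over edges of |omega_x - omega_y|^p - |omega0_x - omega0_y|^p,
  for omega differing from omega0 at finitely many sites (only edges touching the
  set of differences contribute).\<close>
definition H_diff :: "nat \<Rightarrow> real \<Rightarrow> (nat list \<Rightarrow> int) \<Rightarrow> (nat list \<Rightarrow> int) \<Rightarrow> real" where
  "H_diff d p \<omega> \<omega>0 =
     (\<Sum>(x, y)\<in>{(x, y) \<in> tree_edges d. \<omega> x \<noteq> \<omega>0 x \<or> \<omega> y \<noteq> \<omega>0 y}.
        real_of_int \<bar>\<omega> x - \<omega> y\<bar> powr p - real_of_int \<bar>\<omega>0 x - \<omega>0 y\<bar> powr p)"

definition fv_configs :: "nat \<Rightarrow> (nat list \<Rightarrow> int) \<Rightarrow> nat list set \<Rightarrow> (nat list \<Rightarrow> int) set" where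
  "fv_configs d \<omega>0 \<Lambda> = {\<sigma> \<in> config_space d. \<forall>v \<in> tree_V d - \<Lambda>. \<sigma> v = \<omega>0 v}"

definition gibbs_weight :: "nat \<Rightarrow> real \<Rightarrow> real \<Rightarrow> (nat list \<Rightarrow> int) \<Rightarrow> (nat list \<Rightarrow> int) \<Rightarrow> real" where
  "gibbs_weight d p \<beta> \<omega>0 \<sigma> = exp (- \<beta> * H_diff d p \<sigma> \<omega>0)"

definition gibbs_prob ::
  "nat \<Rightarrow> real \<Rightarrow> real \<Rightarrow> (nat list \<Rightarrow> int) \<Rightarrow> nat list set \<Rightarrow> (nat list \<Rightarrow> int) set \<Rightarrow> real" where
  "gibbs_prob d p \<beta> \<omega>0 \<Lambda> A =
     infsum (gibbs_weight d p \<beta> \<omega>0) (fv_configs d \<omega>0 \<Lambda> \<inter> A)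
     / infsum (gibbs_weight d p \<beta> \<omega>0) (fv_configs d \<omega>0 \<Lambda>)"

end

theory Submission
  imports Defs
begin

text \<open>Compare two independent copies \<open>(\<sigma>, \<tau>)\<close> of the finite-volume Gibbs measure: the
  covariance of \<open>A\<close> and \<open>B\<close> is the weight of \<open>\<sigma> \<in> A \<inter> B\<close> minus the weight of \<open>\<sigma> \<in> A, \<tau> \<in> B\<close>.
  Exchanging \<open>\<sigma>\<close> and \<open>\<tau>\<close> on the cluster of \<open>U\<close> in the set where one of them deviates from \<open>\<omega>0\<close>
  preserves the product weight, because the Hamiltonian is a sum over edges, and it maps the
  first event onto the second unless that cluster reaches \<open>W\<close>. A cluster joining \<open>U\<close> to \<open>W\<close> is a
  connected set of at least \<open>dist(W, U) / 2\<close> vertices. By the stability hypothesis every vertex of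
  a prescribed cluster costs a factor \<open>\<epsilon> \<le> exp (-(\<eta> - 1)) M\<^sup>2\<close>, where \<open>M = \<Sum>k. exp (-\<bar>k\<bar> powr p)\<close>,
  and a tree has so few connected sets through a given vertex that for \<open>\<epsilon> \<le> 2 powr -(d + 4)\<close>
  their total weight is at most \<open>2 \<cdot> 2 powr -dist(W, U)\<close>. The bound is uniform in the volume and
  therefore passes to the limit measure.\<close>

lemma tree_adj_sym: "tree_adj d x y \<Longrightarrow> tree_adj d y x"
  unfolding tree_adj_def by blast

lemma snoc_in_tree_V_le: "x @ [i] \<in> tree_V d \<Longrightarrow> i \<le> d"
  unfolding tree_V_def by (cases x) auto

lemma tree_edges_imp_adj: "(x, y) \<in> tree_edges d \<Longrightarrow> tree_adj d x y"
  unfolding tree_edges_def tree_adj_def by auto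

lemma finite_tree_edges_touching:
  assumes "finite D"
  shows "finite {(x, y) \<in> tree_edges d. x \<in> D \<or> y \<in> D}"
proof (rule finite_subset)
  show "{(x, y) \<in> tree_edges d. x \<in> D \<or> y \<in> D} \<subseteq>
     (\<Union>x\<in>D. {x} \<times> (\<lambda>i. x @ [i]) ` {..d}) \<union> (\<lambda>y. (butlast y, y)) ` D"
  proof
    fix e assume "e \<in> {(x, y) \<in> tree_edges d. x \<in> D \<or> y \<in> D}"
    then obtain x i where e: "e = (x, x @ [i])" "x @ [i] \<in> tree_V d" "x \<in> D \<or> x @ [i] \<in> D"
      unfolding tree_edges_def by auto
    then have "i \<le> d" using snoc_in_tree_V_le by blast
    then show "e \<in> (\<Union>x\<in>D. {x} \<times> (\<lambda>i. x @ [i]) ` {..d}) \<union> (\<lambda>y. (butlast y, y)) ` D"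
      using e by (force simp: image_iff)
  qed
qed (use assms in auto)

lemma ball_subset_tree_V: "ball d n \<subseteq> tree_V d"
  unfolding ball_def by auto

lemma finite_ball: "finite (ball d n)"
proof (rule finite_subset[OF _ finite_lists_length_le[of "{..d}" n]])
  show "ball d n \<subseteq> {xs. set xs \<subseteq> {..d} \<and> length xs \<le> n}"
  proof
    fix xs assume xs: "xs \<in> ball d n"
    then have "set xs \<subseteq> {..d}"
      unfolding ball_def tree_V_def by (cases xs) auto
    then show "xs \<in> {xs. set xs \<subseteq> {..d} \<and> length xs \<le> n}" using xs by (simp add: ball_def)
  qed
qed simp

lemma set_dist_le_gdist:
  assumes "finite W" "finite U" "w \<in> W" "u \<in> U"
  shows "set_dist d W U \<le> gdist d w u"
  unfolding set_dist_def by (rule Min_le) (use assms in \<open>auto intro: finite_image_set2\<close>)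

definition induced_edges :: "nat \<Rightarrow> nat list set \<Rightarrow> (nat list \<times> nat list) set" where
  "induced_edges d G = {(a, b). tree_adj d a b \<and> a \<in> G \<and> b \<in> G}"

lemma induced_edges_sym: "(a, b) \<in> induced_edges d G \<Longrightarrow> (b, a) \<in> induced_edges d G"
  unfolding induced_edges_def using tree_adj_sym by blast

lemma rtrancl_induced_edges_sym:
  "(a, b) \<in> (induced_edges d G)\<^sup>* \<Longrightarrow> (b, a) \<in> (induced_edges d G)\<^sup>*"
  by (induction rule: rtrancl_induct)
     (auto dest: induced_edges_sym intro: converse_rtrancl_into_rtrancl)

lemma rtrancl_induced_edges_in: "(u, v) \<in> (induced_edges d G)\<^sup>* \<Longrightarrow> u \<in> G \<Longrightarrow> v \<in> G"
  by (induction rule: rtrancl_induct) (auto simp: induced_edges_def)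

definition connected_from :: "nat \<Rightarrow> nat list \<Rightarrow> nat list set \<Rightarrow> bool" where
  "connected_from d w T \<longleftrightarrow> w \<in> T \<and> (\<forall>v\<in>T. (w, v) \<in> (induced_edges d T)\<^sup>*)"

lemma card_induced_edges_le:
  assumes "finite T"
  shows "card (induced_edges d T) \<le> 2 * card T"
proof -
  \<comment> \<open>an edge is determined by its endpoint farther from the root and its orientation\<close>
  define far_end where "far_end e = (if length (fst e) < length (snd e) then (snd e, True) else (fst e, False))"
    for e :: "nat list \<times> nat list"
  define edge where "edge x = (if snd x then (butlast (fst x), fst x) else (fst x, butlast (fst x)))"
    for x :: "nat list \<times> bool"
  have "edge (far_end e) = e" if e: "e \<in> induced_edges d T" for e
  proof -
    obtain a b where ab: "e = (a, b)" by force
    obtain i where "b = a @ [i] \<or> a = b @ [i]"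
      using e ab unfolding induced_edges_def tree_adj_def by auto
    then show ?thesis unfolding ab far_end_def edge_def by auto
  qed
  then have "inj_on far_end (induced_edges d T)" by (rule inj_on_inverseI)
  moreover have "far_end ` induced_edges d T \<subseteq> T \<times> (UNIV :: bool set)"
    unfolding far_end_def induced_edges_def by auto
  ultimately have "card (induced_edges d T) \<le> card (T \<times> (UNIV :: bool set))"
    by (rule card_inj_on_le) (use assms in simp)
  then show ?thesis by (simp add: card_cartesian_product)
qed

lemma gdist_le_card_connected:
  assumes fin: "finite T" and conn: "connected_from d w T" and u: "u \<in> T"
  shows "gdist d w u \<le> 2 * card T"
proof -
  have finE: "finite (induced_edges d T)"
    by (rule finite_subset[of _ "T \<times> T"]) (use fin in \<open>auto simp: induced_edges_def\<close>)
  have "(w, u) \<in> (induced_edges d T)\<^sup>*" using conn u unfolding connected_from_def by auto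
  then obtain k where k: "k \<le> card (induced_edges d T)" "(w, u) \<in> induced_edges d T ^^ k"
    using rtrancl_finite_eq_relpow[OF finE] by auto
  have "induced_edges d T \<subseteq> {(a, b). tree_adj d a b}" by (auto simp: induced_edges_def)
  then have "induced_edges d T ^^ k \<subseteq> {(a, b). tree_adj d a b} ^^ k"
    by (induction k) (simp_all add: relcomp_mono)
  then have "gdist d w u \<le> k" unfolding gdist_def using k(2) by (blast intro: Least_le)
  then show ?thesis using k(1) card_induced_edges_le[OF fin, of d] by linarith
qed

section \<open>Counting connected sets in the tree\<close>

definition rooted_subtrees :: "nat \<Rightarrow> nat \<Rightarrow> nat list \<Rightarrow> nat list set set" where
  "rooted_subtrees d n r = {T. T \<subseteq> ball d n \<and> r \<in> T \<and> (\<forall>v\<in>T. \<exists>z. v = r @ z) \<and>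
     (\<forall>v\<in>T. v \<noteq> r \<longrightarrow> butlast v \<in> T)}"

lemma finite_rooted_subtrees: "finite (rooted_subtrees d n r)"
  by (rule finite_subset[of _ "Pow (ball d n)"]) (auto simp: rooted_subtrees_def finite_ball)

lemma finite_rooted_subtree: "T \<in> rooted_subtrees d n r \<Longrightarrow> finite T"
  using finite_ball unfolding rooted_subtrees_def by (blast intro: finite_subset)

lemma rooted_subtree_take:
  assumes T: "T \<in> rooted_subtrees d n r" and "v \<in> T" "length r \<le> k" "k \<le> length v"
  shows "take k v \<in> T"
  using assms(2-)
proof (induction "length v - k" arbitrary: v)
  case 0
  then show ?case by simp
next
  case (Suc m)
  then have "v \<noteq> r" by auto
  then have "butlast v \<in> T" using T Suc.prems unfolding rooted_subtrees_def by auto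
  have "take k (butlast v) \<in> T" by (rule Suc.hyps) (use Suc \<open>butlast v \<in> T\<close> in auto)
  moreover have "k \<le> length v - 1" using Suc.hyps(2) by arith
  then have "take k (butlast v) = take k v" by (simp add: butlast_conv_take min_def)
  ultimately show ?case by simp
qed

lemma card_rooted_subtree_ge:
  assumes T: "T \<in> rooted_subtrees d n r" and w: "w \<in> T"
  shows "length w - length r + 1 \<le> card T"
proof -
  have lr: "length r \<le> length w" using T w unfolding rooted_subtrees_def by auto
  have "inj_on (\<lambda>j. take j w) {length r..length w}"
    by (rule inj_onI) (metis atLeastAtMost_iff length_take min.absorb2)
  moreover have "(\<lambda>j. take j w) ` {length r..length w} \<subseteq> T"
    using rooted_subtree_take[OF T w] by auto
  ultimately have "card {length r..length w} \<le> card T"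
    using finite_rooted_subtree[OF T] by (rule card_inj_on_le)
  then show ?thesis using lr by simp
qed

definition children_in_ball :: "nat \<Rightarrow> nat \<Rightarrow> nat list \<Rightarrow> nat list set" where
  "children_in_ball d n r = {c \<in> ball d n. \<exists>i. c = r @ [i]}"

lemma card_children_in_ball_le: "card (children_in_ball d n r) \<le> d + 1"
proof -
  have "children_in_ball d n r \<subseteq> (\<lambda>i. r @ [i]) ` {..d}"
    unfolding children_in_ball_def using ball_subset_tree_V snoc_in_tree_V_le by blast
  then have "card (children_in_ball d n r) \<le> card ((\<lambda>i. r @ [i]) ` {..d})"
    by (rule card_mono[rotated]) simp
  also have "\<dots> \<le> card {..d}" by (rule card_image_le) simp
  finally show ?thesis by simp
qed

lemma finite_children_in_ball: "finite (children_in_ball d n r)"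
  by (rule finite_subset[OF _ finite_ball[of d n]]) (auto simp: children_in_ball_def)

definition branches :: "nat \<Rightarrow> nat \<Rightarrow> nat list \<Rightarrow> nat list set \<Rightarrow> nat list \<Rightarrow> nat list set" where
  "branches d n r T = (\<lambda>c\<in>children_in_ball d n r. {v\<in>T. \<exists>z. v = c @ z})"

lemma branches_in_rooted_subtrees:
  assumes T: "T \<in> rooted_subtrees d n r" and c: "c \<in> children_in_ball d n r"
  shows "branches d n r T c \<in> insert {} (rooted_subtrees d n c)"
proof (cases "branches d n r T c = {}")
  case False
  then obtain v z where v: "v \<in> T" "v = c @ z" using c unfolding branches_def by auto
  obtain i where ci: "c = r @ [i]" using c unfolding children_in_ball_def by auto
  have "take (length c) v \<in> T" by (rule rooted_subtree_take[OF T v(1)]) (use ci v in auto)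
  then have cT: "c \<in> T" using v by simp
  have "branches d n r T c \<in> rooted_subtrees d n c"
    unfolding rooted_subtrees_def
  proof (intro CollectI conjI ballI impI)
    show "branches d n r T c \<subseteq> ball d n" using T c unfolding branches_def rooted_subtrees_def by auto
    show "c \<in> branches d n r T c" using cT c unfolding branches_def by auto
    show "\<exists>z. u = c @ z" if "u \<in> branches d n r T c" for u using that c unfolding branches_def by auto
    fix u assume u: "u \<in> branches d n r T c" "u \<noteq> c"
    then obtain z where z: "u \<in> T" "u = c @ z" "z \<noteq> []" using c unfolding branches_def by auto
    then have "butlast u \<in> T" using T ci unfolding rooted_subtrees_def by auto
    moreover have "butlast u = c @ butlast z" using z by (simp add: butlast_append)
    ultimately show "butlast u \<in> branches d n r T c" using c unfolding branches_def by auto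
  qed
  then show ?thesis by simp
qed simp

lemma rooted_subtree_eq_branches:
  assumes T: "T \<in> rooted_subtrees d n r"
  shows "T = insert r (\<Union>c\<in>children_in_ball d n r. branches d n r T c)"
proof
  show "insert r (\<Union>c\<in>children_in_ball d n r. branches d n r T c) \<subseteq> T"
    using T unfolding rooted_subtrees_def branches_def by auto
  show "T \<subseteq> insert r (\<Union>c\<in>children_in_ball d n r. branches d n r T c)"
  proof
    fix v assume v: "v \<in> T"
    show "v \<in> insert r (\<Union>c\<in>children_in_ball d n r. branches d n r T c)"
    proof (cases "v = r")
      case False
      obtain z where z: "v = r @ z" using T v unfolding rooted_subtrees_def by auto
      with False have "z \<noteq> []" by auto
      let ?c = "take (Suc (length r)) v"
      have c: "?c = r @ [hd z]" using z \<open>z \<noteq> []\<close> by (cases z) auto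
      have "?c \<in> T"
        by (rule rooted_subtree_take[OF T v]) (use z \<open>z \<noteq> []\<close> in \<open>auto simp: Suc_le_eq\<close>)
      then have "?c \<in> children_in_ball d n r" using c T unfolding children_in_ball_def rooted_subtrees_def by auto
      moreover have "v \<in> branches d n r T ?c"
        using v calculation unfolding branches_def by (auto intro: exI[of _ "drop (Suc (length r)) v"])
      ultimately show ?thesis by blast
    qed simp
  qed
qed

lemma card_rooted_subtree_branches:
  assumes T: "T \<in> rooted_subtrees d n r"
  shows "card T = 1 + (\<Sum>c\<in>children_in_ball d n r. card (branches d n r T c))"
proof -
  have fin: "finite (branches d n r T c)" if "c \<in> children_in_ball d n r" for c
    using finite_rooted_subtree[OF T] that unfolding branches_def by auto
  have disj: "branches d n r T c \<inter> branches d n r T c' = {}"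
    if "c \<in> children_in_ball d n r" "c' \<in> children_in_ball d n r" "c \<noteq> c'" for c c'
    using that unfolding branches_def children_in_ball_def by auto
  have "r \<notin> (\<Union>c\<in>children_in_ball d n r. branches d n r T c)"
    unfolding branches_def children_in_ball_def by auto
  then have "card T = 1 + card (\<Union>c\<in>children_in_ball d n r. branches d n r T c)"
    using fin finite_children_in_ball
    by (subst rooted_subtree_eq_branches[OF T]) (simp add: card_insert_disjoint)
  also have "card (\<Union>c\<in>children_in_ball d n r. branches d n r T c) = (\<Sum>c\<in>children_in_ball d n r. card (branches d n r T c))"
    by (rule card_UN_disjoint) (use finite_children_in_ball fin disj in auto)
  finally show ?thesis .
qed

text \<open>Writing \<open>S(r)\<close> for the sum, splitting a rooted subtree into its branches at the at most
  \<open>d + 1\<close> children of the root gives \<open>S(r) \<le> x \<Prod>c. (1 + S(c)) \<le> x 2 ^ (d + 1) \<le> 1\<close>, by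
  induction from the boundary of the ball.\<close>

lemma sum_rooted_subtrees_le_1:
  fixes x :: real
  assumes x: "0 \<le> x" "x \<le> (1/2) ^ (d + 1)"
  shows "(\<Sum>T\<in>rooted_subtrees d n r. x ^ card T) \<le> 1"
proof (induction "n - length r" arbitrary: r rule: less_induct)
  case less
  let ?ch = "children_in_ball d n r"
  let ?P = "PiE ?ch (\<lambda>c. insert {} (rooted_subtrees d n c))"
  have IH: "(\<Sum>T\<in>rooted_subtrees d n c. x ^ card T) \<le> 1" if c: "c \<in> ?ch" for c
  proof (rule less)
    show "n - length c < n - length r"
      using c unfolding children_in_ball_def ball_def by auto
  qed
  have inj: "inj_on (branches d n r) (rooted_subtrees d n r)"
    by (rule inj_onI) (metis rooted_subtree_eq_branches)
  have img: "branches d n r ` rooted_subtrees d n r \<subseteq> ?P"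
  proof
    fix g assume "g \<in> branches d n r ` rooted_subtrees d n r"
    then obtain T where T: "T \<in> rooted_subtrees d n r" "g = branches d n r T" by auto
    show "g \<in> ?P"
      using branches_in_rooted_subtrees[OF T(1)] T(2)
      unfolding branches_def PiE_def extensional_def by auto
  qed
  have "(\<Sum>T\<in>rooted_subtrees d n r. x ^ card T)
      = (\<Sum>T\<in>rooted_subtrees d n r. x * (\<Prod>c\<in>?ch. x ^ card (branches d n r T c)))"
    by (rule sum.cong[OF refl]) (simp add: card_rooted_subtree_branches power_sum)
  also have "\<dots> = (\<Sum>g\<in>branches d n r ` rooted_subtrees d n r. x * (\<Prod>c\<in>?ch. x ^ card (g c)))"
    by (rule sum.reindex[OF inj, symmetric, simplified o_def])
  also have "\<dots> \<le> (\<Sum>g\<in>?P. x * (\<Prod>c\<in>?ch. x ^ card (g c)))"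
    by (rule sum_mono2[OF _ img])
       (use finite_children_in_ball finite_rooted_subtrees x in \<open>auto intro!: finite_PiE mult_nonneg_nonneg prod_nonneg\<close>)
  also have "\<dots> = x * (\<Prod>c\<in>?ch. \<Sum>S\<in>insert {} (rooted_subtrees d n c). x ^ card S)"
    by (simp add: sum_distrib_left[symmetric] finite_rooted_subtrees
        prod_sum_PiE[OF finite_children_in_ball, where B="\<lambda>c. insert {} (rooted_subtrees d n c)"])
  also have "\<dots> \<le> x * (\<Prod>c\<in>?ch. 2)"
  proof (rule mult_left_mono[OF prod_mono])
    fix c assume c: "c \<in> ?ch"
    have "(\<Sum>S\<in>insert {} (rooted_subtrees d n c). x ^ card S) \<le> 1 + (\<Sum>S\<in>rooted_subtrees d n c. x ^ card S)"
      using x by (simp add: sum.insert_if finite_rooted_subtrees sum_nonneg)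
    then show "0 \<le> (\<Sum>S\<in>insert {} (rooted_subtrees d n c). x ^ card S) \<and>
        (\<Sum>S\<in>insert {} (rooted_subtrees d n c). x ^ card S) \<le> 2"
      using IH[OF c] x by (auto intro: sum_nonneg)
  qed (use x in simp)
  also have "\<dots> \<le> (1/2) ^ (d + 1) * 2 ^ (d + 1)"
  proof (rule mult_mono)
    have "(2::real) ^ card ?ch \<le> 2 ^ (d + 1)"
      by (rule power_increasing) (use card_children_in_ball_le[of d n r] in auto)
    then show "(\<Prod>c\<in>?ch. 2) \<le> (2::real) ^ (d + 1)" by simp
  qed (use x in auto)
  also have "\<dots> = 1" by (simp add: power_mult_distrib[symmetric])
  finally show ?case .
qed

lemma snoc_eq_append_prefix:
  assumes "v @ z = c @ [i]" "\<nexists>z'. c = v @ z'"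
  shows "v = c @ [i]"
  using assms by (cases z rule: rev_cases) auto

lemma rtrancl_induced_edges_leaves_subtree:
  assumes "(a, b) \<in> (induced_edges d T)\<^sup>*" "\<exists>z. a = v @ z" "\<nexists>z. b = v @ z"
  shows "butlast v \<in> T"
  using assms
proof (induction rule: rtrancl_induct)
  case (step y c)
  show ?case
  proof (cases "\<exists>z. y = v @ z")
    case True
    then obtain z where z: "y = v @ z" by blast
    have "tree_adj d y c" "c \<in> T" using step(2) unfolding induced_edges_def by auto
    moreover obtain i where "c = y @ [i] \<or> y = c @ [i]"
      using \<open>tree_adj d y c\<close> unfolding tree_adj_def by blast
    ultimately show ?thesis
      using z step(5) snoc_eq_append_prefix[of v z c i] by auto
  qed (use step in blast)
qed simp

text \<open>A connected set is a rooted subtree at its vertex closest to the tree root.\<close>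

lemma connected_imp_rooted_subtree:
  assumes fin: "finite T" and sub: "T \<subseteq> ball d n" and conn: "connected_from d w T"
  obtains r where "T \<in> rooted_subtrees d n r" "\<exists>z. w = r @ z"
proof -
  have wT: "w \<in> T" and reach: "\<And>v. v \<in> T \<Longrightarrow> (w, v) \<in> (induced_edges d T)\<^sup>*"
    using conn unfolding connected_from_def by auto
  have "Min (length ` T) \<in> length ` T" using fin wT by (intro Min_in) auto
  then obtain r where r: "r \<in> T" "length r = Min (length ` T)" by auto
  have rmin: "length r \<le> length v" if "v \<in> T" for v
    using that fin r(2) by simp
  have parent: "butlast v \<in> T" if v: "v \<in> T" "v \<noteq> r" for v
  proof (rule rtrancl_induced_edges_leaves_subtree)
    show "(v, r) \<in> (induced_edges d T)\<^sup>*"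
      using rtrancl_induced_edges_sym[OF reach[OF v(1)]] reach[OF r(1)] by (rule rtrancl_trans)
    show "\<nexists>z. r = v @ z" using rmin[OF v(1)] v(2) by auto
  qed auto
  have descends: "\<exists>z. v = r @ z" if "v \<in> T" for v
    using that
  proof (induction "length v" arbitrary: v rule: less_induct)
    case less
    show ?case
    proof (cases "v = r")
      case False
      then have "v \<noteq> []" using rmin[OF less.prems] by (cases v) auto
      then obtain z where "butlast v = r @ z"
        using less.hyps parent[OF less.prems False] by fastforce
      then have "v = r @ (z @ [last v])"
        using \<open>v \<noteq> []\<close> by (metis append_assoc append_butlast_last_id)
      then show ?thesis by blast
    qed simp
  qed
  have "T \<in> rooted_subtrees d n r"
    unfolding rooted_subtrees_def using sub r(1) descends parent by auto
  then show thesis using that descends[OF wT] by blast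
qed

text \<open>A set rooted \<open>j\<close> levels above \<open>w\<close> has at least \<open>j + 1\<close> vertices, which pays for the
  \<open>j\<close>-th term of a geometric series, and at least \<open>L / 2\<close> vertices, which pays for \<open>2 powr -L\<close>;
  the remaining factor \<open>2 powr -(d + 1)\<close> per vertex is absorbed by the count of rooted subtrees.\<close>

lemma rooted_subtree_weight_le:
  fixes e :: real
  assumes e: "0 \<le> e" "e \<le> (1/2) ^ (d + 4)"
    and T: "T \<in> rooted_subtrees d n r" "w \<in> T" "L \<le> 2 * card T"
  shows "e ^ card T \<le> ((1/2) ^ (d + 1)) ^ card T * (1/2) ^ (length w - length r + L)"
proof -
  have "length w - length r + 1 \<le> card T" by (rule card_rooted_subtree_ge[OF T(1,2)])
  then have "length w - length r + L \<le> 3 * card T" using T(3) by linarith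
  have "e ^ card T \<le> ((1/2) ^ (d + 4)) ^ card T" by (rule power_mono) (use e in auto)
  also have "\<dots> = (1/2) ^ ((d + 1) * card T + 3 * card T)"
    by (simp add: power_mult[symmetric] algebra_simps)
  also have "\<dots> = ((1/2) ^ (d + 1)) ^ card T * (1/2) ^ (3 * card T)"
    by (metis power_add power_mult)
  also have "\<dots> \<le> ((1/2) ^ (d + 1)) ^ card T * (1/2) ^ (length w - length r + L)"
    by (rule mult_left_mono[OF power_decreasing])
       (use \<open>length w - length r + L \<le> 3 * card T\<close> in auto)
  finally show ?thesis .
qed

lemma sum_connected_sets_le:
  fixes e :: real
  assumes e: "0 \<le> e" "e \<le> (1/2) ^ (d + 4)"
    and \<T>: "\<And>T. T \<in> \<T> \<Longrightarrow> T \<subseteq> ball d n \<and> connected_from d w T \<and> L \<le> 2 * card T"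
  shows "(\<Sum>T\<in>\<T>. e ^ card T) \<le> 2 * (1/2) ^ L"
proof -
  define x :: real where "x = (1/2) ^ (d + 1)"
  define R where "R j = rooted_subtrees d n (take (length w - j) w)" for j
  define h where "h j T = (if T \<in> R j then x ^ card T * (1/2) ^ (j + L) else 0)" for j T
  have x0: "0 \<le> x" unfolding x_def by simp
  have h_nonneg: "0 \<le> h j T" for j T unfolding h_def using x0 by simp
  have fin\<T>: "finite \<T>"
    by (rule finite_subset[of _ "Pow (ball d n)"]) (use \<T> finite_ball in auto)
  have e_le_h: "e ^ card T \<le> (\<Sum>j\<le>length w. h j T)" if T: "T \<in> \<T>" for T
  proof -
    have T1: "T \<subseteq> ball d n" "connected_from d w T" "L \<le> 2 * card T" using \<T>[OF T] by auto
    obtain r z where r: "T \<in> rooted_subtrees d n r" "w = r @ z"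
      using connected_imp_rooted_subtree[OF finite_subset[OF T1(1) finite_ball] T1(1,2)] by blast
    define j where "j = length w - length r"
    have "e ^ card T \<le> x ^ card T * (1/2) ^ (j + L)"
      using rooted_subtree_weight_le[OF e r(1) _ T1(3)] T1(2)
      unfolding connected_from_def x_def j_def by blast
    also have "\<dots> = h j T" unfolding h_def R_def j_def using r by simp
    also have "\<dots> \<le> (\<Sum>j\<le>length w. h j T)"
      by (rule member_le_sum) (use h_nonneg in \<open>auto simp: j_def\<close>)
    finally show ?thesis .
  qed
  have sum_h: "(\<Sum>T\<in>\<T>. h j T) \<le> (1/2) ^ (j + L)" for j
  proof -
    have "(\<Sum>T\<in>\<T>. h j T) = (\<Sum>T\<in>\<T> \<inter> R j. h j T)"
      by (rule sum.mono_neutral_right[OF fin\<T>]) (auto simp: h_def)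
    also have "\<dots> \<le> (\<Sum>T\<in>R j. h j T)"
      by (rule sum_mono2) (auto simp: R_def finite_rooted_subtrees h_nonneg)
    also have "\<dots> = (\<Sum>T\<in>R j. x ^ card T) * (1/2) ^ (j + L)"
      unfolding h_def by (simp add: sum_distrib_right)
    also have "\<dots> \<le> (1/2) ^ (j + L)"
      using sum_rooted_subtrees_le_1[OF x0] unfolding R_def x_def
      by (simp add: mult_left_le_one_le)
    finally show ?thesis .
  qed
  have "(\<Sum>T\<in>\<T>. e ^ card T) \<le> (\<Sum>T\<in>\<T>. \<Sum>j\<le>length w. h j T)"
    by (rule sum_mono) (rule e_le_h)
  also have "\<dots> = (\<Sum>j\<le>length w. \<Sum>T\<in>\<T>. h j T)" by (rule sum.swap)
  also have "\<dots> \<le> (\<Sum>j\<le>length w. (1/2) ^ (j + L))" by (rule sum_mono) (rule sum_h)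
  also have "\<dots> = (1/2) ^ L * (\<Sum>j\<le>length w. (1/2) ^ j)"
    by (simp add: power_add sum_distrib_left mult.commute)
  also have "(\<Sum>j\<le>length w. (1/2::real) ^ j) \<le> 2"
  proof -
    have "(\<Sum>j\<le>m. (1/2::real) ^ j) = 2 - (1/2) ^ m" for m
      by (induction m) auto
    then show ?thesis by simp
  qed
  finally show ?thesis by simp
qed

section \<open>Locality of the Hamiltonian\<close>

definition patch :: "'a set \<Rightarrow> ('a \<Rightarrow> 'b) \<Rightarrow> ('a \<Rightarrow> 'b) \<Rightarrow> 'a \<Rightarrow> 'b" where
  "patch K f g = (\<lambda>v. if v \<in> K then f v else g v)"

lemma patch_in_config_space:
  "f \<in> config_space d \<Longrightarrow> g \<in> config_space d \<Longrightarrow> patch K f g \<in> config_space d"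
  unfolding config_space_def patch_def PiE_def extensional_def by auto

definition disagreement :: "('a \<Rightarrow> 'b) \<Rightarrow> ('a \<Rightarrow> 'b) \<Rightarrow> 'a set" where
  "disagreement \<omega>0 \<sigma> = {v. \<sigma> v \<noteq> \<omega>0 v}"

definition H_edges :: "nat \<Rightarrow> (nat list \<Rightarrow> int) \<Rightarrow> (nat list \<Rightarrow> int) \<Rightarrow> (nat list \<times> nat list) set" where
  "H_edges d \<sigma> \<omega>0 = {(x, y) \<in> tree_edges d. \<sigma> x \<noteq> \<omega>0 x \<or> \<sigma> y \<noteq> \<omega>0 y}"

lemma finite_H_edges: "finite (disagreement \<omega>0 \<sigma>) \<Longrightarrow> finite (H_edges d \<sigma> \<omega>0)"
  by (rule finite_subset[OF _ finite_tree_edges_touching[of "disagreement \<omega>0 \<sigma>" d]])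
     (auto simp: H_edges_def disagreement_def)

text \<open>If \<open>K\<close> is closed under adjacency inside the disagreement set of \<open>\<sigma>\<close>, no edge of the
  Hamiltonian joins a disagreement in \<open>K\<close> to one outside \<open>K\<close>, so the energy splits.\<close>

lemma H_diff_patch_split:
  assumes fin: "finite (disagreement \<omega>0 \<sigma>)"
    and closed: "\<And>a b. a \<in> K \<Longrightarrow> a \<in> disagreement \<omega>0 \<sigma> \<Longrightarrow> b \<in> disagreement \<omega>0 \<sigma> \<Longrightarrow>
                       tree_adj d a b \<Longrightarrow> b \<in> K"
  shows "H_diff d p \<sigma> \<omega>0 = H_diff d p (patch K \<sigma> \<omega>0) \<omega>0 + H_diff d p (patch K \<omega>0 \<sigma>) \<omega>0"
proof -
  define g where "g f = (\<lambda>(x, y). real_of_int \<bar>f x - f y\<bar> powr p - real_of_int \<bar>\<omega>0 x - \<omega>0 y\<bar> powr p)"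
    for f :: "nat list \<Rightarrow> int"
  let ?s1 = "patch K \<sigma> \<omega>0" and ?s2 = "patch K \<omega>0 \<sigma>"
  have H: "H_diff d p f \<omega>0 = sum (g f) (H_edges d f \<omega>0)" for f
    unfolding H_diff_def H_edges_def g_def by simp
  have closed': "a \<in> K \<longleftrightarrow> b \<in> K"
    if "\<sigma> a \<noteq> \<omega>0 a" "\<sigma> b \<noteq> \<omega>0 b" "tree_adj d a b" for a b
    using that closed tree_adj_sym unfolding disagreement_def by blast
  have agree: "\<sigma> x = f x \<and> \<sigma> y = f y" if "(x, y) \<in> H_edges d f \<omega>0" "f = ?s1 \<or> f = ?s2" for x y f
    using that closed'[of x y] tree_edges_imp_adj[of x y d] unfolding H_edges_def patch_def
    by (auto split: if_splits) blast+
  have E: "H_edges d \<sigma> \<omega>0 = H_edges d ?s1 \<omega>0 \<union> H_edges d ?s2 \<omega>0"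
    unfolding H_edges_def patch_def by auto
  have disj: "H_edges d ?s1 \<omega>0 \<inter> H_edges d ?s2 \<omega>0 = {}"
    using agree unfolding H_edges_def patch_def by (fastforce split: if_splits)
  have fin12: "finite (H_edges d ?s1 \<omega>0)" "finite (H_edges d ?s2 \<omega>0)"
    using finite_H_edges[OF fin] E by (auto intro: finite_subset)
  have "H_diff d p \<sigma> \<omega>0 = sum (g \<sigma>) (H_edges d ?s1 \<omega>0) + sum (g \<sigma>) (H_edges d ?s2 \<omega>0)"
    unfolding H E using fin12 disj by (rule sum.union_disjoint)
  also have "sum (g \<sigma>) (H_edges d ?s1 \<omega>0) = sum (g ?s1) (H_edges d ?s1 \<omega>0)"
    by (rule sum.cong) (use agree in \<open>auto simp: g_def\<close>)
  also have "sum (g \<sigma>) (H_edges d ?s2 \<omega>0) = sum (g ?s2) (H_edges d ?s2 \<omega>0)"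
    by (rule sum.cong) (use agree in \<open>auto simp: g_def\<close>)
  finally show ?thesis unfolding H .
qed

lemma gibbs_weight_patch_split:
  assumes "finite (disagreement \<omega>0 \<sigma>)"
    and "\<And>a b. a \<in> K \<Longrightarrow> a \<in> disagreement \<omega>0 \<sigma> \<Longrightarrow> b \<in> disagreement \<omega>0 \<sigma> \<Longrightarrow>
                tree_adj d a b \<Longrightarrow> b \<in> K"
  shows "gibbs_weight d p \<beta> \<omega>0 \<sigma> =
    gibbs_weight d p \<beta> \<omega>0 (patch K \<sigma> \<omega>0) * gibbs_weight d p \<beta> \<omega>0 (patch K \<omega>0 \<sigma>)"
  using H_diff_patch_split[OF assms, where p=p]
  by (simp add: gibbs_weight_def distrib_left exp_add[symmetric])

lemma gibbs_weight_self: "gibbs_weight d p \<beta> \<omega>0 \<omega>0 = 1"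
  unfolding gibbs_weight_def H_diff_def by simp

lemma F_sets_agree:
  assumes "A \<in> F_sets d W" "\<sigma> \<in> config_space d" "\<sigma>' \<in> config_space d"
    and "\<And>v. v \<in> W \<Longrightarrow> \<sigma> v = \<sigma>' v"
  shows "\<sigma> \<in> A \<longleftrightarrow> \<sigma>' \<in> A"
proof -
  obtain B where "A = {\<omega> \<in> config_space d. restrict \<omega> W \<in> B}"
    using assms(1) unfolding F_sets_def by blast
  moreover have "restrict \<sigma> W = restrict \<sigma>' W" using assms(4) by (auto simp: restrict_def)
  ultimately show ?thesis using assms(2,3) by auto
qed

lemma F_sets_Int:
  assumes "A \<in> F_sets d W" "B \<in> F_sets d U"
  shows "A \<inter> B \<in> F_sets d (W \<union> U)"
proof -
  obtain BA BB where "A = {\<omega> \<in> config_space d. restrict \<omega> W \<in> BA}"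
      "B = {\<omega> \<in> config_space d. restrict \<omega> U \<in> BB}"
    using assms unfolding F_sets_def by blast
  then have "A \<inter> B = {\<omega> \<in> config_space d.
      restrict \<omega> (W \<union> U) \<in> {f. restrict f W \<in> BA \<and> restrict f U \<in> BB}}"
    by (auto simp: restrict_restrict Int_absorb1)
  then show ?thesis unfolding F_sets_def by blast
qed

lemma infsum_mono_set_nonneg:
  fixes f :: "'a \<Rightarrow> real"
  assumes "f summable_on B" "A \<subseteq> B" "\<And>x. x \<in> B \<Longrightarrow> f x \<ge> 0"
  shows "infsum f A \<le> infsum f B"
  using assms by (intro infsum_mono2) (auto intro: summable_on_subset_banach)

lemma infsum_le_inj_on_nonneg:
  fixes f :: "'a \<Rightarrow> real" and g :: "'b \<Rightarrow> real"
  assumes inj: "inj_on \<phi> A" and img: "\<phi> ` A \<subseteq> B"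
    and g: "g summable_on B" "\<And>y. y \<in> B \<Longrightarrow> g y \<ge> 0"
    and le: "\<And>x. x \<in> A \<Longrightarrow> f x \<le> g (\<phi> x)" and f_nonneg: "\<And>x. x \<in> A \<Longrightarrow> f x \<ge> 0"
  shows "f summable_on A \<and> infsum f A \<le> infsum g B"
proof -
  have g\<phi>: "(g \<circ> \<phi>) summable_on A"
    using summable_on_subset_banach[OF g(1) img] summable_on_reindex[OF inj] by blast
  have f: "f summable_on A"
    by (rule summable_on_comparison_test[OF g\<phi>]) (use le f_nonneg in auto)
  have "infsum f A \<le> infsum (g \<circ> \<phi>) A" by (rule infsum_mono[OF f g\<phi>]) (use le in auto)
  also have "\<dots> = infsum g (\<phi> ` A)" using infsum_reindex[OF inj] by metis
  also have "\<dots> \<le> infsum g B" by (rule infsum_mono_set_nonneg[OF g(1) img g(2)])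
  finally show ?thesis using f by blast
qed

lemma summable_on_product_nonneg:
  fixes f :: "'a \<Rightarrow> real" and g :: "'b \<Rightarrow> real"
  assumes f: "f summable_on A" "\<And>x. x \<in> A \<Longrightarrow> f x \<ge> 0"
    and g: "g summable_on B" "\<And>y. y \<in> B \<Longrightarrow> g y \<ge> 0"
  shows "(\<lambda>(x, y). f x * g y) summable_on (A \<times> B)"
proof (rule nonneg_bdd_above_summable_on)
  show "\<And>z. z \<in> A \<times> B \<Longrightarrow> 0 \<le> (\<lambda>(x, y). f x * g y) z" using f g by auto
  show "bdd_above (sum (\<lambda>(x, y). f x * g y) ` {F. F \<subseteq> A \<times> B \<and> finite F})"
  proof (rule bdd_aboveI2)
    fix F assume "F \<in> {F. F \<subseteq> A \<times> B \<and> finite F}"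
    then have fin: "finite (fst ` F)" "finite (snd ` F)" and sub: "fst ` F \<subseteq> A" "snd ` F \<subseteq> B"
      by auto
    have "sum (\<lambda>(x, y). f x * g y) F \<le> sum (\<lambda>(x, y). f x * g y) (fst ` F \<times> snd ` F)"
    proof (rule sum_mono2)
      show "finite (fst ` F \<times> snd ` F)" using fin by simp
      show "F \<subseteq> fst ` F \<times> snd ` F" by force
      fix z assume "z \<in> fst ` F \<times> snd ` F - F"
      then obtain a b where "z = (a, b)" "a \<in> A" "b \<in> B" using sub by (force simp: image_iff)
      then show "0 \<le> (\<lambda>(x, y). f x * g y) z" using f g by simp
    qed
    also have "\<dots> = sum f (fst ` F) * sum g (snd ` F)"
      by (simp add: sum_product sum.cartesian_product)
    also have "\<dots> \<le> infsum f A * infsum g B"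
      by (intro mult_mono finite_sum_le_infsum)
         (use fin sub f g in \<open>auto intro!: sum_nonneg infsum_nonneg\<close>)
    finally show "sum (\<lambda>(x, y). f x * g y) F \<le> infsum f A * infsum g B" .
  qed
qed

lemma infsum_product_nonneg:
  fixes f :: "'a \<Rightarrow> real" and g :: "'b \<Rightarrow> real"
  assumes f: "f summable_on A" "\<And>x. x \<in> A \<Longrightarrow> f x \<ge> 0"
    and g: "g summable_on B" "\<And>y. y \<in> B \<Longrightarrow> g y \<ge> 0"
  shows "infsum (\<lambda>(x, y). f x * g y) (A \<times> B) = infsum f A * infsum g B"
proof -
  have "infsum (\<lambda>(x, y). f x * g y) (A \<times> B) = infsum (\<lambda>x. infsum (\<lambda>y. f x * g y) B) A"
    using infsum_Sigma_banach[OF summable_on_product_nonneg[OF assms]] by simp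
  also have "\<dots> = infsum (\<lambda>x. f x * infsum g B) A"
    by (rule infsum_cong) (use g in \<open>simp add: infsum_cmult_right\<close>)
  also have "\<dots> = infsum f A * infsum g B"
    by (rule infsum_cmult_left) (use f in simp)
  finally show ?thesis .
qed

lemma summable_on_prod_PiE_nonneg:
  fixes f :: "'a \<Rightarrow> 'b \<Rightarrow> real"
  assumes fin: "finite A"
    and nonneg: "\<And>x y. x \<in> A \<Longrightarrow> y \<in> B x \<Longrightarrow> f x y \<ge> 0"
    and summable: "\<And>x. x \<in> A \<Longrightarrow> f x summable_on B x"
  shows "(\<lambda>g. \<Prod>x\<in>A. f x (g x)) summable_on (PiE A B)"
proof (rule nonneg_bdd_above_summable_on)
  show "\<And>g. g \<in> PiE A B \<Longrightarrow> 0 \<le> (\<Prod>x\<in>A. f x (g x))"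
    using nonneg by (auto intro: prod_nonneg)
  show "bdd_above (sum (\<lambda>g. \<Prod>x\<in>A. f x (g x)) ` {F. F \<subseteq> PiE A B \<and> finite F})"
  proof (rule bdd_aboveI2)
    fix P assume "P \<in> {F. F \<subseteq> PiE A B \<and> finite F}"
    then have P: "P \<subseteq> PiE A B" "finite P" by auto
    define B' where "B' x = {g x | g. g \<in> P}" for x
    have finite_B': "finite (B' x)" for x
      using P by (auto simp: B'_def)
    have B'B: "B' x \<subseteq> B x" if "x \<in> A" for x
      unfolding B'_def using P that by auto
    have "(\<Sum>g\<in>P. \<Prod>x\<in>A. f x (g x)) \<le> (\<Sum>g\<in>PiE A B'. \<Prod>x\<in>A. f x (g x))"
    proof (rule sum_mono2)
      show "finite (PiE A B')" using fin finite_B' by (simp add: finite_PiE)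
      show "P \<subseteq> PiE A B'" using P by (auto simp: B'_def)
      fix g assume "g \<in> PiE A B' - P"
      then have "\<And>x. x \<in> A \<Longrightarrow> g x \<in> B x" using B'B by (auto simp: PiE_iff)
      then show "0 \<le> (\<Prod>x\<in>A. f x (g x))" using nonneg by (auto intro!: prod_nonneg)
    qed
    also have "\<dots> = (\<Prod>x\<in>A. \<Sum>y\<in>B' x. f x y)"
      by (rule prod_sum_PiE[symmetric]) (use fin finite_B' in auto)
    also have "\<dots> \<le> (\<Prod>x\<in>A. infsum (f x) (B x))"
      by (rule prod_mono)
         (use nonneg B'B summable finite_B' in \<open>auto intro!: sum_nonneg finite_sum_le_infsum\<close>)
    finally show "(\<Sum>g\<in>P. \<Prod>x\<in>A. f x (g x)) \<le> (\<Prod>x\<in>A. infsum (f x) (B x))" .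
  qed
qed

lemma abs_infsum_diff_le_infsum_Diff:
  fixes f :: "'a \<Rightarrow> real"
  assumes f: "f summable_on X" "\<And>x. x \<in> X \<Longrightarrow> f x \<ge> 0"
    and S: "S1 \<subseteq> X" "S2 \<subseteq> X" and eq: "infsum f (S1 \<inter> G) = infsum f (S2 \<inter> G)"
  shows "\<bar>infsum f S1 - infsum f S2\<bar> \<le> infsum f (X - G)"
proof -
  have split: "infsum f S = infsum f (S \<inter> G) + infsum f (S - G)"
    and bad: "0 \<le> infsum f (S - G)" "infsum f (S - G) \<le> infsum f (X - G)" if "S \<subseteq> X" for S
  proof -
    have summable: "f summable_on Y" if "Y \<subseteq> X" for Y
      using f(1) that by (rule summable_on_subset_banach)
    have "infsum f (S \<inter> G \<union> (S - G)) = infsum f (S \<inter> G) + infsum f (S - G)"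
      by (rule infsum_Un_disjoint) (use summable[of "S \<inter> G"] summable[of "S - G"] \<open>S \<subseteq> X\<close> in auto)
    moreover have "S \<inter> G \<union> (S - G) = S" by blast
    ultimately show "infsum f S = infsum f (S \<inter> G) + infsum f (S - G)" by simp
    show "0 \<le> infsum f (S - G)" by (rule infsum_nonneg) (use f(2) \<open>S \<subseteq> X\<close> in auto)
    show "infsum f (S - G) \<le> infsum f (X - G)"
      by (rule infsum_mono_set_nonneg[OF summable]) (use f(2) \<open>S \<subseteq> X\<close> in auto)
  qed
  show ?thesis
    using split[OF S(1)] split[OF S(2)] bad[OF S(1)] bad[OF S(2)] eq by linarith
qed

lemma infsum_UN_le:
  fixes f :: "'a \<Rightarrow> real"
  assumes "finite I" and nonneg: "\<And>x. f x \<ge> 0"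
    and "\<And>i. i \<in> I \<Longrightarrow> f summable_on S i"
  shows "f summable_on (\<Union>i\<in>I. S i) \<and> infsum f (\<Union>i\<in>I. S i) \<le> (\<Sum>i\<in>I. infsum f (S i))"
  using assms(1,3)
proof (induction I rule: finite_induct)
  case empty
  then show ?case by simp
next
  case (insert i I)
  let ?U = "\<Union>i\<in>I. S i"
  have IH: "f summable_on ?U" "infsum f ?U \<le> (\<Sum>i\<in>I. infsum f (S i))"
    using insert by auto
  have Si: "f summable_on S i" using insert by auto
  have rest: "f summable_on (?U - S i)"
    using IH(1) by (rule summable_on_subset_banach) auto
  have eq: "(\<Union>j\<in>insert i I. S j) = S i \<union> (?U - S i)" by auto
  have "infsum f (\<Union>j\<in>insert i I. S j) = infsum f (S i) + infsum f (?U - S i)"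
    unfolding eq by (rule infsum_Un_disjoint[OF Si rest]) auto
  also have "infsum f (?U - S i) \<le> infsum f ?U"
    by (rule infsum_mono_set_nonneg[OF IH(1)]) (use nonneg in auto)
  moreover have "f summable_on (\<Union>j\<in>insert i I. S j)"
    unfolding eq by (rule summable_on_Un_disjoint[OF Si rest]) auto
  ultimately show ?case
    using IH(2) insert.hyps by simp
qed

definition site_weight :: "real \<Rightarrow> real \<Rightarrow> int \<Rightarrow> real" where
  "site_weight p \<eta> k = exp (- \<eta> * real_of_int \<bar>k\<bar> powr p)"

lemma site_weight_nonneg: "site_weight p \<eta> k \<ge> 0"
  unfolding site_weight_def by simp

lemma site_weight_mono:
  assumes "\<eta> \<ge> \<eta>'" "\<eta>' \<ge> 0"
  shows "site_weight p \<eta> k \<le> site_weight p \<eta>' k"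
  unfolding site_weight_def using assms by (simp add: mult_right_mono)

lemma exp_neg_powr_le_inverse_square:
  fixes p :: real and n m :: nat
  assumes p: "p > 0" and m: "m \<ge> 1" "real m * p \<ge> 2" and n: "n \<ge> 1"
  shows "exp (- (real n powr p)) \<le> real m ^ m * inverse (real n ^ 2)"
proof -
  define t where "t = real n powr p"
  have t0: "t > 0" using n by (simp add: t_def)
  have "t / m \<le> exp (t / m)"
    using exp_ge_add_one_self[of "t / m"] by linarith
  then have "(t / m) ^ m \<le> exp (t / m) ^ m"
    by (rule power_mono) (use t0 m in simp)
  also have "exp (t / m) ^ m = exp t"
    using m by (simp add: exp_of_nat_mult[symmetric])
  finally have le: "(t / m) ^ m \<le> exp t" .
  have tm: "t ^ m = real n powr (p * m)"
    unfolding t_def using n by (simp add: powr_realpow[symmetric] powr_powr)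
  have "real n powr 2 \<le> real n powr (p * m)"
    by (rule powr_mono) (use m n in \<open>auto simp: mult.commute\<close>)
  then have n2: "real n ^ 2 \<le> t ^ m"
    using n tm by (simp add: powr_realpow)
  have "exp (- t) = inverse (exp t)" by (simp add: exp_minus)
  also have "\<dots> \<le> inverse ((t / m) ^ m)"
    by (rule le_imp_inverse_le[OF le]) (use t0 m in simp)
  also have "\<dots> = real m ^ m * inverse (t ^ m)"
    using m by (simp add: power_divide field_simps)
  also have "\<dots> \<le> real m ^ m * inverse (real n ^ 2)"
    by (rule mult_left_mono[OF le_imp_inverse_le[OF n2]]) (use n in auto)
  finally show ?thesis unfolding t_def .
qed

lemma summable_exp_neg_powr:
  fixes p :: real
  assumes p: "p > 0"
  shows "summable (\<lambda>n::nat. exp (- (real n powr p)))"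
proof -
  define m where "m = nat \<lceil>2 / p\<rceil> + 1"
  have "2 / p \<le> real m" unfolding m_def by linarith
  then have m: "m \<ge> 1" "real m * p \<ge> 2"
    using p by (auto simp: m_def field_simps)
  have "summable (\<lambda>n. real m ^ m * inverse (real n ^ 2))"
    by (intro summable_mult inverse_power_summable) auto
  then show ?thesis
    by (rule summable_comparison_test'[where N=1])
       (use exp_neg_powr_le_inverse_square[OF p m] in auto)
qed

lemma site_weight_1_summable:
  assumes p: "p > 0"
  shows "site_weight p 1 summable_on UNIV"
proof -
  have s: "(\<lambda>n::nat. exp (- (real n powr p))) summable_on UNIV"
    using summable_exp_neg_powr[OF p] by (subst summable_on_UNIV_nonneg_real_iff) auto
  have inj: "inj (\<lambda>n::nat. int n)" "inj (\<lambda>n::nat. - int n)"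
    by (simp_all add: inj_on_def)
  have "site_weight p 1 summable_on range (\<lambda>n::nat. int n)"
    by (subst summable_on_reindex[OF inj(1)]) (use s in \<open>simp add: o_def site_weight_def\<close>)
  moreover have "site_weight p 1 summable_on range (\<lambda>n::nat. - int n)"
    by (subst summable_on_reindex[OF inj(2)]) (use s in \<open>simp add: o_def site_weight_def\<close>)
  moreover have "(UNIV :: int set) = range (\<lambda>n::nat. int n) \<union> range (\<lambda>n::nat. - int n)"
  proof -
    have "k \<in> range (\<lambda>n::nat. int n) \<union> range (\<lambda>n::nat. - int n)" for k :: int
      by (cases "k \<ge> 0") (auto simp: image_iff intro: exI[of _ "nat k"] exI[of _ "nat (- k)"])
    then show ?thesis by blast
  qed
  ultimately show ?thesis by (metis summable_on_union)
qed

lemma site_weight_shift_summable: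
  assumes "p > 0" "\<eta> \<ge> 1"
  shows "(\<lambda>k. site_weight p \<eta> (k - c)) summable_on UNIV"
proof -
  have inj: "inj (\<lambda>k::int. k - c)" by (simp add: inj_on_def)
  have "range (\<lambda>k::int. k - c) = UNIV"
    by (auto simp: image_iff intro: exI[of _ "_ + c"])
  moreover have "site_weight p \<eta> summable_on UNIV"
    by (rule summable_on_comparison_test[OF site_weight_1_summable])
       (use assms site_weight_mono site_weight_nonneg in auto)
  ultimately have "site_weight p \<eta> summable_on range (\<lambda>k::int. k - c)" by simp
  then show ?thesis by (subst (asm) summable_on_reindex[OF inj]) (simp add: o_def)
qed

lemma infsum_site_weight_ge_1:
  assumes "p > 0"
  shows "infsum (site_weight p 1) UNIV \<ge> 1"
  using finite_sum_le_infsum[OF site_weight_1_summable[OF assms], of "{0}"] assms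
  by (simp add: site_weight_nonneg site_weight_def)

lemma site_weight_pair_le:
  assumes p: "p > 0" and \<eta>: "\<eta> \<ge> 1" and ab: "(a, b) \<noteq> (0, 0)"
  shows "site_weight p \<eta> a * site_weight p \<eta> b
    \<le> exp (- (\<eta> - 1)) * (site_weight p 1 a * site_weight p 1 b)"
proof -
  define s where "s = real_of_int \<bar>a\<bar> powr p + real_of_int \<bar>b\<bar> powr p"
  have "k \<noteq> 0 \<Longrightarrow> real_of_int \<bar>k\<bar> powr p \<ge> 1" for k :: int
    using p by (intro ge_one_powr_ge_zero) auto
  moreover have "real_of_int \<bar>k\<bar> powr p \<ge> 0" for k :: int
    by simp
  ultimately have s1: "s \<ge> 1"
    using ab unfolding s_def by (cases "a = 0") (metis add.commute add_increasing, metis add_increasing2)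
  have "site_weight p \<eta> a * site_weight p \<eta> b = exp (- \<eta> * s)"
    unfolding site_weight_def s_def by (simp add: exp_add[symmetric] algebra_simps)
  also have "\<dots> \<le> exp (- (\<eta> - 1) + - s)"
    using mult_nonneg_nonneg[of "\<eta> - 1" "s - 1"] \<eta> s1 by (simp add: algebra_simps)
  also have "\<dots> = exp (- (\<eta> - 1)) * (site_weight p 1 a * site_weight p 1 b)"
    unfolding site_weight_def s_def by (simp add: exp_add[symmetric] algebra_simps)
  finally show ?thesis .
qed

section \<open>Disagreement clusters of pairs of configurations\<close>

definition pair_disagreement ::
  "(nat list \<Rightarrow> int) \<Rightarrow> (nat list \<Rightarrow> int) \<times> (nat list \<Rightarrow> int) \<Rightarrow> nat list set" where
  "pair_disagreement \<omega>0 x = disagreement \<omega>0 (fst x) \<union> disagreement \<omega>0 (snd x)"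

definition cluster ::
  "nat \<Rightarrow> (nat list \<Rightarrow> int) \<Rightarrow> nat list set \<Rightarrow> (nat list \<Rightarrow> int) \<times> (nat list \<Rightarrow> int) \<Rightarrow> nat list set" where
  "cluster d \<omega>0 S x = {v. \<exists>u\<in>S. u \<in> pair_disagreement \<omega>0 x \<and>
      (u, v) \<in> (induced_edges d (pair_disagreement \<omega>0 x))\<^sup>*}"

lemma cluster_subset: "cluster d \<omega>0 S x \<subseteq> pair_disagreement \<omega>0 x"
  unfolding cluster_def using rtrancl_induced_edges_in by blast

lemma cluster_base: "u \<in> S \<Longrightarrow> u \<in> pair_disagreement \<omega>0 x \<Longrightarrow> u \<in> cluster d \<omega>0 S x"
  unfolding cluster_def by blast

lemma cluster_closed:
  assumes "a \<in> cluster d \<omega>0 S x" "b \<in> pair_disagreement \<omega>0 x" "tree_adj d a b"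
  shows "b \<in> cluster d \<omega>0 S x"
proof -
  have "(a, b) \<in> induced_edges d (pair_disagreement \<omega>0 x)"
    using assms cluster_subset unfolding induced_edges_def by blast
  then show ?thesis
    using assms(1) unfolding cluster_def by (blast intro: rtrancl_into_rtrancl)
qed

definition swap_cluster ::
  "nat \<Rightarrow> (nat list \<Rightarrow> int) \<Rightarrow> nat list set \<Rightarrow> (nat list \<Rightarrow> int) \<times> (nat list \<Rightarrow> int) \<Rightarrow>
     (nat list \<Rightarrow> int) \<times> (nat list \<Rightarrow> int)" where
  "swap_cluster d \<omega>0 S x =
     (patch (cluster d \<omega>0 S x) (snd x) (fst x), patch (cluster d \<omega>0 S x) (fst x) (snd x))"

lemma pair_disagreement_swap_cluster:
  "pair_disagreement \<omega>0 (swap_cluster d \<omega>0 S x) = pair_disagreement \<omega>0 x"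
  unfolding pair_disagreement_def swap_cluster_def disagreement_def patch_def by auto

lemma cluster_swap_cluster: "cluster d \<omega>0 S (swap_cluster d \<omega>0 S x) = cluster d \<omega>0 S x"
  unfolding cluster_def pair_disagreement_swap_cluster ..

lemma swap_cluster_involution: "swap_cluster d \<omega>0 S (swap_cluster d \<omega>0 S x) = x"
  unfolding swap_cluster_def[of d \<omega>0 S "swap_cluster d \<omega>0 S x"] cluster_swap_cluster
  unfolding swap_cluster_def patch_def by (auto simp: fun_eq_iff prod_eq_iff)

text \<open>Outside the cluster of \<open>U\<close> the two configurations agree on \<open>U\<close>, so the swap exchanges
  their restrictions to \<open>U\<close>; it does not touch \<open>W\<close> when the cluster avoids \<open>W\<close>.\<close>

lemma swap_cluster_agree:
  assumes "cluster d \<omega>0 U x \<inter> W = {}"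
  shows "\<And>v. v \<in> W \<Longrightarrow> fst (swap_cluster d \<omega>0 U x) v = fst x v"
    and "\<And>u. u \<in> U \<Longrightarrow> fst (swap_cluster d \<omega>0 U x) u = snd x u"
    and "\<And>u. u \<in> U \<Longrightarrow> snd (swap_cluster d \<omega>0 U x) u = fst x u"
proof -
  have "fst x u = snd x u" if "u \<in> U" "u \<notin> cluster d \<omega>0 U x" for u
  proof -
    have "u \<notin> pair_disagreement \<omega>0 x" using that cluster_base by blast
    then show ?thesis unfolding pair_disagreement_def disagreement_def by simp
  qed
  then show "\<And>v. v \<in> W \<Longrightarrow> fst (swap_cluster d \<omega>0 U x) v = fst x v"
    and "\<And>u. u \<in> U \<Longrightarrow> fst (swap_cluster d \<omega>0 U x) u = snd x u"
    and "\<And>u. u \<in> U \<Longrightarrow> snd (swap_cluster d \<omega>0 U x) u = fst x u"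
    using assms unfolding swap_cluster_def patch_def by auto
qed

lemma swap_cluster_events:
  assumes A: "A \<in> F_sets d W" and B: "B \<in> F_sets d U" and avoid: "cluster d \<omega>0 U x \<inter> W = {}"
    and x: "fst x \<in> config_space d" "snd x \<in> config_space d"
  shows "fst x \<in> A \<inter> B \<Longrightarrow> fst (swap_cluster d \<omega>0 U x) \<in> A \<and> snd (swap_cluster d \<omega>0 U x) \<in> B"
    and "fst x \<in> A \<Longrightarrow> snd x \<in> B \<Longrightarrow> fst (swap_cluster d \<omega>0 U x) \<in> A \<inter> B"
proof -
  let ?y = "swap_cluster d \<omega>0 U x"
  have y: "fst ?y \<in> config_space d" "snd ?y \<in> config_space d"
    using x unfolding swap_cluster_def by (auto intro: patch_in_config_space)
  note agree = swap_cluster_agree[OF avoid]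
  have "fst x \<in> A \<longleftrightarrow> fst ?y \<in> A"
    by (rule F_sets_agree[OF A x(1) y(1)]) (use agree in auto)
  moreover have "fst x \<in> B \<longleftrightarrow> snd ?y \<in> B"
    by (rule F_sets_agree[OF B x(1) y(2)]) (use agree in auto)
  moreover have "snd x \<in> B \<longleftrightarrow> fst ?y \<in> B"
    by (rule F_sets_agree[OF B x(2) y(1)]) (use agree in auto)
  ultimately show "fst x \<in> A \<inter> B \<Longrightarrow> fst ?y \<in> A \<and> snd ?y \<in> B"
    and "fst x \<in> A \<Longrightarrow> snd x \<in> B \<Longrightarrow> fst ?y \<in> A \<inter> B" by auto
qed

lemma rtrancl_induced_edges_reachable:
  assumes "(w, v) \<in> (induced_edges d G)\<^sup>*"
  shows "(w, v) \<in> (induced_edges d {v. (w, v) \<in> (induced_edges d G)\<^sup>*})\<^sup>*"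
  using assms
proof (induction rule: rtrancl_induct)
  case (step y z)
  then have "(y, z) \<in> induced_edges d {v. (w, v) \<in> (induced_edges d G)\<^sup>*}"
    unfolding induced_edges_def by (auto intro: rtrancl_into_rtrancl)
  then show ?case using step by (blast intro: rtrancl_into_rtrancl)
qed simp

lemma connected_from_cluster:
  assumes "w \<in> pair_disagreement \<omega>0 x"
  shows "connected_from d w (cluster d \<omega>0 {w} x)"
proof -
  have "cluster d \<omega>0 {w} x = {v. (w, v) \<in> (induced_edges d (pair_disagreement \<omega>0 x))\<^sup>*}"
    using assms unfolding cluster_def by auto
  then show ?thesis
    unfolding connected_from_def using rtrancl_induced_edges_reachable by auto
qed

locale stable_ground_state =
  fixes d :: nat and p :: real and \<eta> :: real and \<beta> :: real and \<omega>0 :: "nat list \<Rightarrow> int"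
  assumes p_pos: "p > 0" and eta_ge_1: "\<eta> \<ge> 1"
    and ground_state: "\<omega>0 \<in> config_space d"
    and stability: "\<forall>\<omega> \<in> config_space d. finite {v. \<omega> v \<noteq> \<omega>0 v} \<longrightarrow>
        \<beta> * H_diff d p \<omega> \<omega>0 \<ge> \<eta> * (\<Sum>v\<in>{v. \<omega> v \<noteq> \<omega>0 v}. real_of_int \<bar>\<omega> v - \<omega>0 v\<bar> powr p)"
begin

abbreviation "w \<equiv> gibbs_weight d p \<beta> \<omega>0"
abbreviation "Conf \<equiv> fv_configs d \<omega>0"

lemma w_nonneg: "w \<sigma> \<ge> 0"
  unfolding gibbs_weight_def by simp

lemma Conf_iff: "\<sigma> \<in> Conf R \<longleftrightarrow> \<sigma> \<in> config_space d \<and> (\<forall>v. v \<notin> R \<longrightarrow> \<sigma> v = \<omega>0 v)"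
proof -
  have "\<sigma> v = \<omega>0 v" if "\<sigma> \<in> config_space d" "v \<notin> tree_V d" for v
    using that ground_state PiE_arb[of _ "tree_V d" "\<lambda>_. UNIV" v] unfolding config_space_def
    by metis
  then show ?thesis unfolding fv_configs_def by auto
qed

lemma Conf_disagreement: "\<sigma> \<in> Conf R \<Longrightarrow> disagreement \<omega>0 \<sigma> \<subseteq> R"
  unfolding Conf_iff disagreement_def by blast

lemma finite_disagreement_Conf: "\<sigma> \<in> Conf R \<Longrightarrow> finite R \<Longrightarrow> finite (disagreement \<omega>0 \<sigma>)"
  using Conf_disagreement finite_subset by blast

lemma ground_state_in_Conf: "\<omega>0 \<in> Conf R"
  using ground_state unfolding fv_configs_def by auto

lemma Conf_mono: "R \<subseteq> R' \<Longrightarrow> Conf R \<subseteq> Conf R'"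
  unfolding fv_configs_def by auto

lemma patch_in_Conf: "f \<in> Conf R \<Longrightarrow> g \<in> Conf R \<Longrightarrow> patch K f g \<in> Conf R"
  unfolding Conf_iff using patch_in_config_space by (auto simp: patch_def)

lemma patch_ground_state_in_Conf:
  assumes "f \<in> Conf R"
  shows "patch K f \<omega>0 \<in> Conf (R \<inter> K)" "patch K \<omega>0 f \<in> Conf (R - K)"
  using assms patch_in_config_space ground_state unfolding Conf_iff by (auto simp: patch_def)

lemma gibbs_weight_patch_split_Conf:
  assumes "\<sigma> \<in> Conf R" "finite R" "disagreement \<omega>0 \<sigma> \<subseteq> G"
    and "\<And>a b. a \<in> K \<Longrightarrow> a \<in> G \<Longrightarrow> b \<in> G \<Longrightarrow> tree_adj d a b \<Longrightarrow> b \<in> K"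
  shows "w \<sigma> = w (patch K \<sigma> \<omega>0) * w (patch K \<omega>0 \<sigma>)"
  by (rule gibbs_weight_patch_split[OF finite_disagreement_Conf[OF assms(1,2)]])
     (use assms(3,4) in blast)

lemma w_le_prod_site_weight:
  assumes \<sigma>: "\<sigma> \<in> Conf R" and fin: "finite R"
  shows "w \<sigma> \<le> (\<Prod>v\<in>R. site_weight p \<eta> (\<sigma> v - \<omega>0 v))"
proof -
  have D: "{v. \<sigma> v \<noteq> \<omega>0 v} \<subseteq> R"
    using Conf_disagreement[OF \<sigma>] unfolding disagreement_def .
  have "\<eta> * (\<Sum>v\<in>R. real_of_int \<bar>\<sigma> v - \<omega>0 v\<bar> powr p) \<le> \<beta> * H_diff d p \<sigma> \<omega>0"
  proof -
    have "(\<Sum>v\<in>{v. \<sigma> v \<noteq> \<omega>0 v}. real_of_int \<bar>\<sigma> v - \<omega>0 v\<bar> powr p)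
        = (\<Sum>v\<in>R. real_of_int \<bar>\<sigma> v - \<omega>0 v\<bar> powr p)"
      by (rule sum.mono_neutral_left[OF fin D]) auto
    moreover have "finite {v. \<sigma> v \<noteq> \<omega>0 v}"
      using fin D by (rule finite_subset[rotated])
    ultimately show ?thesis using stability \<sigma> unfolding Conf_iff by auto
  qed
  then have "- \<beta> * H_diff d p \<sigma> \<omega>0 \<le> (\<Sum>v\<in>R. - \<eta> * real_of_int \<bar>\<sigma> v - \<omega>0 v\<bar> powr p)"
    by (simp add: sum_negf flip: sum_distrib_left)
  then have "w \<sigma> \<le> exp (\<Sum>v\<in>R. - \<eta> * real_of_int \<bar>\<sigma> v - \<omega>0 v\<bar> powr p)"
    unfolding gibbs_weight_def by simp
  also have "\<dots> = (\<Prod>v\<in>R. site_weight p \<eta> (\<sigma> v - \<omega>0 v))"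
    using fin by (simp add: exp_sum site_weight_def)
  finally show ?thesis .
qed

lemma bij_betw_restrict_Conf:
  assumes "R \<subseteq> tree_V d"
  shows "bij_betw (\<lambda>\<sigma>. restrict \<sigma> R) (Conf R) (PiE R (\<lambda>_. UNIV))"
proof (rule bij_betw_byWitness[where f'="\<lambda>f. patch R f \<omega>0"])
  show "\<forall>\<sigma>\<in>Conf R. patch R (restrict \<sigma> R) \<omega>0 = \<sigma>"
    by (auto simp: fun_eq_iff patch_def Conf_iff)
  show "\<forall>f\<in>PiE R (\<lambda>_. UNIV). restrict (patch R f \<omega>0) R = f"
    by (auto simp: fun_eq_iff PiE_def extensional_def patch_def)
  show "(\<lambda>f. patch R f \<omega>0) ` PiE R (\<lambda>_. UNIV) \<subseteq> Conf R"
    using assms ground_state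
    by (auto simp: Conf_iff config_space_def PiE_def extensional_def patch_def)
qed auto

lemma w_summable:
  assumes R: "R \<subseteq> tree_V d" "finite R"
  shows "w summable_on Conf R"
proof -
  define g where "g f = (\<Prod>v\<in>R. site_weight p \<eta> (f v - \<omega>0 v))" for f :: "nat list \<Rightarrow> int"
  have "g summable_on PiE R (\<lambda>_. UNIV)"
    unfolding g_def
    by (rule summable_on_prod_PiE_nonneg[where f="\<lambda>v k. site_weight p \<eta> (k - \<omega>0 v)"])
       (use R site_weight_nonneg site_weight_shift_summable[OF p_pos eta_ge_1] in auto)
  then have "(\<lambda>\<sigma>. g (restrict \<sigma> R)) summable_on Conf R"
    using summable_on_reindex_bij_betw[OF bij_betw_restrict_Conf[OF R(1)]] by blast
  then show ?thesis
  proof (rule summable_on_comparison_test)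
    fix \<sigma> assume "\<sigma> \<in> Conf R"
    then show "w \<sigma> \<le> g (restrict \<sigma> R)"
      using w_le_prod_site_weight[OF _ R(2)] by (simp add: g_def cong: prod.cong)
  qed (rule w_nonneg)
qed

lemma partition_function_ge_1:
  assumes "R \<subseteq> tree_V d" "finite R"
  shows "infsum w (Conf R) \<ge> 1"
  using finite_sum_le_infsum[OF w_summable[OF assms], of "{\<omega>0}"]
  by (simp add: ground_state_in_Conf w_nonneg gibbs_weight_self)

definition pair_weight :: "(nat list \<Rightarrow> int) \<times> (nat list \<Rightarrow> int) \<Rightarrow> real" where
  "pair_weight = (\<lambda>(\<sigma>, \<tau>). w \<sigma> * w \<tau>)"

lemma pair_weight_apply: "pair_weight x = w (fst x) * w (snd x)"
  unfolding pair_weight_def by (simp add: case_prod_beta)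

lemma pair_weight_nonneg: "pair_weight x \<ge> 0"
  unfolding pair_weight_apply using w_nonneg by simp

lemma pair_weight_summable:
  assumes "R \<subseteq> tree_V d" "finite R"
  shows "pair_weight summable_on (Conf R \<times> Conf R)"
  unfolding pair_weight_def by (rule summable_on_product_nonneg) (use w_summable[OF assms] w_nonneg in auto)

lemma infsum_pair_weight_Times:
  assumes R: "R \<subseteq> tree_V d" "finite R"
  shows "infsum pair_weight ((Conf R \<inter> X) \<times> (Conf R \<inter> Y)) = infsum w (Conf R \<inter> X) * infsum w (Conf R \<inter> Y)"
proof -
  have summable: "w summable_on (Conf R \<inter> Z)" for Z
    using w_summable[OF R] by (rule summable_on_subset_banach) auto
  show ?thesis
    unfolding pair_weight_def by (rule infsum_product_nonneg) (use summable w_nonneg in auto)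
qed

lemma swap_cluster_in_Conf:
  "fst x \<in> Conf R \<Longrightarrow> snd x \<in> Conf R \<Longrightarrow> swap_cluster d \<omega>0 S x \<in> Conf R \<times> Conf R"
  unfolding swap_cluster_def by (auto intro: patch_in_Conf)

text \<open>The cluster is closed under adjacency inside the joint disagreement set, so each weight
  factorises along it and the swap only regroups the four factors.\<close>

lemma pair_weight_swap_cluster:
  assumes R: "finite R" and x: "x \<in> Conf R \<times> Conf R"
  shows "pair_weight (swap_cluster d \<omega>0 S x) = pair_weight x"
proof -
  let ?K = "cluster d \<omega>0 S x" and ?G = "pair_disagreement \<omega>0 x"
  have split: "w f = w (patch ?K f \<omega>0) * w (patch ?K \<omega>0 f)"
    if "f \<in> Conf R" "disagreement \<omega>0 f \<subseteq> ?G" for f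
    by (rule gibbs_weight_patch_split_Conf[OF that(1) R that(2)]) (use cluster_closed in blast)
  let ?\<sigma> = "fst x" and ?\<tau> = "snd x"
  have in_Conf: "?\<sigma> \<in> Conf R" "?\<tau> \<in> Conf R" "patch ?K ?\<tau> ?\<sigma> \<in> Conf R" "patch ?K ?\<sigma> ?\<tau> \<in> Conf R"
    using x patch_in_Conf by auto
  have in_G: "disagreement \<omega>0 ?\<sigma> \<subseteq> ?G" "disagreement \<omega>0 ?\<tau> \<subseteq> ?G"
      "disagreement \<omega>0 (patch ?K ?\<tau> ?\<sigma>) \<subseteq> ?G" "disagreement \<omega>0 (patch ?K ?\<sigma> ?\<tau>) \<subseteq> ?G"
    unfolding pair_disagreement_def disagreement_def patch_def by auto
  have patch_patch: "patch ?K (patch ?K f g) \<omega>0 = patch ?K f \<omega>0"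
      "patch ?K \<omega>0 (patch ?K f g) = patch ?K \<omega>0 g" for f g
    unfolding patch_def by (auto simp: fun_eq_iff)
  show ?thesis
    using split[OF in_Conf(1) in_G(1)] split[OF in_Conf(2) in_G(2)]
      split[OF in_Conf(3) in_G(3)] split[OF in_Conf(4) in_G(4)]
    unfolding swap_cluster_def pair_weight_apply by (simp add: patch_patch ac_simps)
qed

text \<open>The switching argument: on pairs whose \<open>U\<close>-cluster avoids \<open>W\<close>, swapping the cluster
  is a weight-preserving bijection between \<open>(A \<inter> B) \<times> \<Omega>\<close> and \<open>A \<times> B\<close>.\<close>

lemma covariance_le_cluster_hits:
  assumes R: "R \<subseteq> tree_V d" "finite R"
    and A: "A \<in> F_sets d W" and B: "B \<in> F_sets d U"
  shows "\<bar>infsum w (Conf R \<inter> (A \<inter> B)) * infsum w (Conf R) - infsum w (Conf R \<inter> A) * infsum w (Conf R \<inter> B)\<bar>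
     \<le> infsum pair_weight {x \<in> Conf R \<times> Conf R. cluster d \<omega>0 U x \<inter> W \<noteq> {}}"
proof -
  let ?C = "Conf R" and ?swap = "swap_cluster d \<omega>0 U"
  define S1 where "S1 = (?C \<inter> (A \<inter> B)) \<times> (?C \<inter> UNIV)"
  define S2 where "S2 = (?C \<inter> A) \<times> (?C \<inter> B)"
  define Good where "Good = {x. cluster d \<omega>0 U x \<inter> W = {}}"
  have S12: "S1 \<subseteq> ?C \<times> ?C" "S2 \<subseteq> ?C \<times> ?C" unfolding S1_def S2_def by auto
  have swap_in: "?swap x \<in> ?C \<times> ?C \<inter> Good" if "x \<in> ?C \<times> ?C \<inter> Good" for x
    using that swap_cluster_in_Conf[of x R] by (auto simp: Good_def cluster_swap_cluster)
  have config: "fst x \<in> config_space d" "snd x \<in> config_space d" if "x \<in> ?C \<times> ?C" for x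
    using that unfolding mem_Times_iff Conf_iff by auto
  have "bij_betw ?swap (S1 \<inter> Good) (S2 \<inter> Good)"
  proof (rule bij_betw_byWitness[where f' = ?swap])
    show "?swap ` (S1 \<inter> Good) \<subseteq> S2 \<inter> Good"
    proof (rule image_subsetI)
      fix x assume x: "x \<in> S1 \<inter> Good"
      then have "?swap x \<in> ?C \<times> ?C \<inter> Good" using swap_in S12 by blast
      moreover have "fst (?swap x) \<in> A \<and> snd (?swap x) \<in> B"
        by (rule swap_cluster_events(1)[OF A B _ config]) (use x S12 in \<open>auto simp: S1_def Good_def\<close>)
      ultimately show "?swap x \<in> S2 \<inter> Good"
        unfolding S2_def by (cases "?swap x") auto
    qed
    show "?swap ` (S2 \<inter> Good) \<subseteq> S1 \<inter> Good"
    proof (rule image_subsetI)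
      fix x assume x: "x \<in> S2 \<inter> Good"
      then have "?swap x \<in> ?C \<times> ?C \<inter> Good" using swap_in S12 by blast
      moreover have "fst (?swap x) \<in> A \<inter> B"
        by (rule swap_cluster_events(2)[OF A B _ config]) (use x S12 in \<open>auto simp: S2_def Good_def\<close>)
      ultimately show "?swap x \<in> S1 \<inter> Good"
        unfolding S1_def by (cases "?swap x") auto
    qed
  qed (use swap_cluster_involution in auto)
  then have "infsum (\<lambda>x. pair_weight (?swap x)) (S1 \<inter> Good) = infsum pair_weight (S2 \<inter> Good)"
    by (rule infsum_reindex_bij_betw)
  moreover have "infsum (\<lambda>x. pair_weight (?swap x)) (S1 \<inter> Good) = infsum pair_weight (S1 \<inter> Good)"
    by (rule infsum_cong) (use pair_weight_swap_cluster[OF R(2)] S12(1) in blast)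
  ultimately have "\<bar>infsum pair_weight S1 - infsum pair_weight S2\<bar> \<le> infsum pair_weight (?C \<times> ?C - Good)"
    by (intro abs_infsum_diff_le_infsum_Diff[OF pair_weight_summable[OF R] _ S12]) (auto simp: pair_weight_nonneg)
  moreover have "?C \<times> ?C - Good = {x \<in> ?C \<times> ?C. cluster d \<omega>0 U x \<inter> W \<noteq> {}}"
    unfolding Good_def by blast
  ultimately show ?thesis
    unfolding S1_def S2_def infsum_pair_weight_Times[OF R] by simp
qed

section \<open>The Peierls estimate\<close>

text \<open>The total weight of a single site on which at least one of two configurations deviates
  from the ground state.\<close>

definition site_activity :: real where
  "site_activity = infsum (\<lambda>(a, b). site_weight p \<eta> a * site_weight p \<eta> b) (UNIV - {(0, 0)})"

lemma site_activity_summable: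
  "(\<lambda>(a, b). site_weight p \<eta> a * site_weight p \<eta> b) summable_on (UNIV - {(0::int, 0::int)})"
proof -
  have "site_weight p \<eta> summable_on UNIV"
    using site_weight_shift_summable[OF p_pos eta_ge_1, of 0] by simp
  then have "(\<lambda>(a, b). site_weight p \<eta> a * site_weight p \<eta> b) summable_on (UNIV \<times> UNIV)"
    by (intro summable_on_product_nonneg) (auto simp: site_weight_nonneg)
  then show ?thesis by (rule summable_on_subset_banach) auto
qed

lemma site_activity_nonneg: "site_activity \<ge> 0"
  unfolding site_activity_def by (rule infsum_nonneg) (auto simp: site_weight_nonneg)

lemma site_activity_le:
  "site_activity \<le> exp (- (\<eta> - 1)) * (infsum (site_weight p 1) UNIV)\<^sup>2"
proof -
  let ?c = "exp (- (\<eta> - 1))"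
  let ?f1 = "\<lambda>(a, b). site_weight p 1 a * site_weight p 1 b"
  have f1: "?f1 summable_on (UNIV \<times> UNIV :: (int \<times> int) set)"
    by (rule summable_on_product_nonneg) (use site_weight_1_summable[OF p_pos] site_weight_nonneg in auto)
  then have cf1: "(\<lambda>z. ?c * ?f1 z) summable_on (UNIV \<times> UNIV)"
    by (rule summable_on_cmult_right)
  have "site_activity \<le> infsum (\<lambda>z. ?c * ?f1 z) (UNIV - {(0, 0)})"
    unfolding site_activity_def
    by (rule infsum_mono[OF site_activity_summable summable_on_subset_banach[OF cf1]])
       (use site_weight_pair_le[OF p_pos eta_ge_1] in auto)
  also have "\<dots> \<le> infsum (\<lambda>z. ?c * ?f1 z) (UNIV \<times> UNIV)"
    by (rule infsum_mono_set_nonneg[OF cf1]) (auto simp: site_weight_nonneg)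
  also have "\<dots> = ?c * infsum ?f1 (UNIV \<times> UNIV)"
    by (rule infsum_cmult_right) (rule f1)
  also have "infsum ?f1 (UNIV \<times> UNIV) = (infsum (site_weight p 1) UNIV)\<^sup>2"
    by (subst infsum_product_nonneg)
       (use site_weight_1_summable[OF p_pos] site_weight_nonneg in \<open>auto simp: power2_eq_square\<close>)
  finally show ?thesis .
qed

definition full_deviation_pairs :: "nat list set \<Rightarrow> ((nat list \<Rightarrow> int) \<times> (nat list \<Rightarrow> int)) set" where
  "full_deviation_pairs T = {x \<in> Conf T \<times> Conf T. \<forall>v\<in>T. fst x v \<noteq> \<omega>0 v \<or> snd x v \<noteq> \<omega>0 v}"

lemma infsum_full_deviation_pairs_le:
  assumes T: "T \<subseteq> tree_V d" "finite T"
  shows "pair_weight summable_on full_deviation_pairs T \<and>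
    infsum pair_weight (full_deviation_pairs T) \<le> site_activity ^ card T"
proof -
  define N where "N = (UNIV - {(0::int, 0::int)})"
  define f where "f = (\<lambda>(a, b). site_weight p \<eta> a * site_weight p \<eta> b)"
  define g where "g h = (\<Prod>v\<in>T. f (h v))" for h :: "nat list \<Rightarrow> int \<times> int"
  define \<psi> where "\<psi> x = (\<lambda>v\<in>T. (fst x v - \<omega>0 v, snd x v - \<omega>0 v))"
    for x :: "(nat list \<Rightarrow> int) \<times> (nat list \<Rightarrow> int)"
  let ?P = "full_deviation_pairs T"
  have f_nonneg: "f z \<ge> 0" for z
    unfolding f_def using site_weight_nonneg by (auto simp: case_prod_beta)
  have f: "f summable_on N" unfolding f_def N_def by (rule site_activity_summable)
  have g: "g summable_on PiE T (\<lambda>_. N)"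
    unfolding g_def by (rule summable_on_prod_PiE_nonneg) (use T f_nonneg f in auto)
  have "infsum g (PiE T (\<lambda>_. N)) = site_activity ^ card T"
    unfolding g_def by (subst infsum_prod_PiE[OF T(2) _ g[unfolded g_def]])
      (use f in \<open>auto simp: site_activity_def f_def N_def\<close>)
  moreover have "pair_weight summable_on ?P \<and> infsum pair_weight ?P \<le> infsum g (PiE T (\<lambda>_. N))"
  proof (rule infsum_le_inj_on_nonneg[OF _ _ g])
    show "inj_on \<psi> ?P"
    proof (rule inj_onI)
      fix x y assume xy: "x \<in> ?P" "y \<in> ?P" "\<psi> x = \<psi> y"
      have "fst x v = fst y v \<and> snd x v = snd y v" for v
      proof (cases "v \<in> T")
        case True
        then show ?thesis using fun_cong[OF xy(3), of v] unfolding \<psi>_def by simp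
      qed (use xy(1,2) in \<open>auto simp: full_deviation_pairs_def Conf_iff\<close>)
      then show "x = y" by (simp add: prod_eq_iff fun_eq_iff)
    qed
    show "\<psi> ` ?P \<subseteq> PiE T (\<lambda>_. N)"
      unfolding \<psi>_def full_deviation_pairs_def N_def by auto
    fix x assume "x \<in> ?P"
    then have c: "fst x \<in> Conf T" "snd x \<in> Conf T" unfolding full_deviation_pairs_def by auto
    have "pair_weight x \<le> (\<Prod>v\<in>T. site_weight p \<eta> (fst x v - \<omega>0 v)) * (\<Prod>v\<in>T. site_weight p \<eta> (snd x v - \<omega>0 v))"
      unfolding pair_weight_apply
      by (rule mult_mono) (use w_le_prod_site_weight c T(2) w_nonneg in \<open>auto intro: prod_nonneg site_weight_nonneg\<close>)
    also have "\<dots> = g (\<psi> x)"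
      unfolding g_def f_def \<psi>_def by (simp add: prod.distrib[symmetric])
    finally show "pair_weight x \<le> g (\<psi> x)" .
  qed (auto simp: g_def pair_weight_nonneg intro!: prod_nonneg f_nonneg)
  ultimately show ?thesis by simp
qed

text \<open>Peierls bound: cutting a pair along a cluster \<open>T\<close> factorises its weight into a pair in
  volume \<open>T\<close> deviating everywhere and an unconstrained pair.\<close>

lemma infsum_cluster_eq_le:
  assumes L: "\<Lambda> \<subseteq> tree_V d" "finite \<Lambda>" and T: "T \<subseteq> \<Lambda>"
  shows "infsum pair_weight {x \<in> Conf \<Lambda> \<times> Conf \<Lambda>. cluster d \<omega>0 {v} x = T}
    \<le> site_activity ^ card T * (infsum w (Conf \<Lambda>))\<^sup>2"
proof -
  let ?C = "Conf \<Lambda>" and ?P = "full_deviation_pairs T"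
  define Q where "Q = {x \<in> ?C \<times> ?C. cluster d \<omega>0 {v} x = T}"
  define \<Phi> where "\<Phi> x = ((patch T (fst x) \<omega>0, patch T (snd x) \<omega>0), (patch T \<omega>0 (fst x), patch T \<omega>0 (snd x)))"
    for x :: "(nat list \<Rightarrow> int) \<times> (nat list \<Rightarrow> int)"
  define F where "F = (\<lambda>(y, z). pair_weight y * pair_weight z)"
  have full: "pair_weight summable_on ?P" "infsum pair_weight ?P \<le> site_activity ^ card T"
    using infsum_full_deviation_pairs_le L T by (auto intro: finite_subset)
  have "infsum pair_weight Q \<le> infsum F (?P \<times> (?C \<times> ?C))"
  proof (rule conjunct2[OF infsum_le_inj_on_nonneg[where \<phi> = \<Phi>]])
    show "inj_on \<Phi> Q"
    proof (rule inj_onI)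
      fix x y assume "\<Phi> x = \<Phi> y"
      then have "fst x u = fst y u \<and> snd x u = snd y u" for u
        unfolding \<Phi>_def patch_def by (cases "u \<in> T") (auto dest!: fun_cong[of _ _ u])
      then show "x = y" by (simp add: prod_eq_iff fun_eq_iff)
    qed
    show "F summable_on ?P \<times> (?C \<times> ?C)"
      unfolding F_def by (rule summable_on_product_nonneg) (use full pair_weight_summable[OF L] pair_weight_nonneg in auto)
    show "\<Phi> ` Q \<subseteq> ?P \<times> (?C \<times> ?C)"
    proof (rule image_subsetI)
      fix x assume "x \<in> Q"
      then have c: "fst x \<in> ?C" "snd x \<in> ?C" and T_eq: "cluster d \<omega>0 {v} x = T" unfolding Q_def by auto
      have "\<forall>u\<in>T. patch T (fst x) \<omega>0 u \<noteq> \<omega>0 u \<or> patch T (snd x) \<omega>0 u \<noteq> \<omega>0 u"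
        using cluster_subset[of d \<omega>0 "{v}" x] T_eq unfolding pair_disagreement_def disagreement_def patch_def by auto
      moreover have "patch T (fst x) \<omega>0 \<in> Conf T" "patch T (snd x) \<omega>0 \<in> Conf T"
        using patch_ground_state_in_Conf(1)[OF c(1)] patch_ground_state_in_Conf(1)[OF c(2)] Conf_mono by blast+
      moreover have "patch T \<omega>0 (fst x) \<in> ?C" "patch T \<omega>0 (snd x) \<in> ?C"
        using patch_ground_state_in_Conf(2)[OF c(1)] patch_ground_state_in_Conf(2)[OF c(2)] Conf_mono by blast+
      ultimately show "\<Phi> x \<in> ?P \<times> (?C \<times> ?C)"
        unfolding \<Phi>_def full_deviation_pairs_def by auto
    qed
    fix x assume "x \<in> Q"
    then have c: "fst x \<in> ?C" "snd x \<in> ?C" and T_eq: "cluster d \<omega>0 {v} x = T" unfolding Q_def by auto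
    have closed: "\<And>a b. a \<in> T \<Longrightarrow> a \<in> pair_disagreement \<omega>0 x \<Longrightarrow> b \<in> pair_disagreement \<omega>0 x \<Longrightarrow>
        tree_adj d a b \<Longrightarrow> b \<in> T"
      using cluster_closed T_eq by blast
    have "disagreement \<omega>0 (fst x) \<subseteq> pair_disagreement \<omega>0 x" "disagreement \<omega>0 (snd x) \<subseteq> pair_disagreement \<omega>0 x"
      unfolding pair_disagreement_def by auto
    then show "pair_weight x \<le> F (\<Phi> x)"
      using gibbs_weight_patch_split_Conf[OF c(1) L(2) _ closed] gibbs_weight_patch_split_Conf[OF c(2) L(2) _ closed]
      unfolding F_def pair_weight_apply \<Phi>_def by simp
  qed (auto simp: F_def pair_weight_nonneg)
  also have "\<dots> = infsum pair_weight ?P * infsum pair_weight (?C \<times> ?C)"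
    unfolding F_def by (rule infsum_product_nonneg) (use full pair_weight_summable[OF L] pair_weight_nonneg in auto)
  also have "infsum pair_weight (?C \<times> ?C) = (infsum w ?C)\<^sup>2"
    using infsum_pair_weight_Times[OF L, of UNIV UNIV] by (simp add: power2_eq_square)
  also have "infsum pair_weight ?P * \<dots> \<le> site_activity ^ card T * (infsum w ?C)\<^sup>2"
    by (rule mult_right_mono) (use full in auto)
  finally show ?thesis unfolding Q_def .
qed

section \<open>Decay of correlations\<close>

lemma cluster_of_member:
  assumes x: "x \<in> Conf \<Lambda> \<times> Conf \<Lambda>" and w': "w' \<in> cluster d \<omega>0 U x"
  shows "cluster d \<omega>0 {w'} x \<subseteq> \<Lambda>" "connected_from d w' (cluster d \<omega>0 {w'} x)"
    "cluster d \<omega>0 {w'} x \<inter> U \<noteq> {}"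
proof -
  obtain u where u: "u \<in> U" "u \<in> pair_disagreement \<omega>0 x"
      "(u, w') \<in> (induced_edges d (pair_disagreement \<omega>0 x))\<^sup>*"
    using w' unfolding cluster_def by blast
  then have w'G: "w' \<in> pair_disagreement \<omega>0 x" using rtrancl_induced_edges_in by blast
  have "cluster d \<omega>0 {w'} x \<subseteq> pair_disagreement \<omega>0 x" by (rule cluster_subset)
  also have "\<dots> \<subseteq> \<Lambda>"
    using x Conf_disagreement[of "fst x" \<Lambda>] Conf_disagreement[of "snd x" \<Lambda>]
    unfolding pair_disagreement_def by (simp add: mem_Times_iff)
  finally show "cluster d \<omega>0 {w'} x \<subseteq> \<Lambda>" .
  show "connected_from d w' (cluster d \<omega>0 {w'} x)" by (rule connected_from_cluster[OF w'G])
  show "cluster d \<omega>0 {w'} x \<inter> U \<noteq> {}"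
    using u(1,2) rtrancl_induced_edges_sym[OF u(3)] w'G unfolding cluster_def by blast
qed

text \<open>A pair whose \<open>U\<close>-cluster meets \<open>W\<close> is charged to the cluster of a vertex \<open>w' \<in> W\<close>: a
  connected set through \<open>w'\<close> reaching \<open>U\<close>, hence of at least \<open>set_dist d W U / 2\<close> vertices.\<close>

lemma infsum_cluster_hits_le:
  assumes W: "finite W" and U: "finite U" and small: "site_activity \<le> (1/2) ^ (d + 4)"
  shows "infsum pair_weight {x \<in> Conf (ball d n) \<times> Conf (ball d n). cluster d \<omega>0 U x \<inter> W \<noteq> {}}
     \<le> real (card W) * (2 * (1/2) ^ set_dist d W U) * (infsum w (Conf (ball d n)))\<^sup>2"
proof -
  let ?L = "ball d n"
  let ?C = "Conf ?L"
  let ?Z = "infsum w ?C"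
  have L: "?L \<subseteq> tree_V d" "finite ?L" using ball_subset_tree_V finite_ball by auto
  define \<T> where "\<T> w' = {T. T \<subseteq> ?L \<and> connected_from d w' T \<and> T \<inter> U \<noteq> {}}" for w'
  define Q where "Q = (\<lambda>(w', T). {x \<in> ?C \<times> ?C. cluster d \<omega>0 {w'} x = T})"
  define I where "I = Sigma W \<T>"
  have fin\<T>: "finite (\<T> w')" for w'
    by (rule finite_subset[of _ "Pow ?L"]) (use L in \<open>auto simp: \<T>_def\<close>)
  have finI: "finite I" unfolding I_def using W fin\<T> by auto
  have Q_summable: "pair_weight summable_on Q i" for i
    using pair_weight_summable[OF L] by (rule summable_on_subset_banach) (auto simp: Q_def split: prod.splits)
  have cover: "{x \<in> ?C \<times> ?C. cluster d \<omega>0 U x \<inter> W \<noteq> {}} \<subseteq> (\<Union>i\<in>I. Q i)"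
  proof
    fix x assume x: "x \<in> {x \<in> ?C \<times> ?C. cluster d \<omega>0 U x \<inter> W \<noteq> {}}"
    then obtain w' where w': "w' \<in> W" "w' \<in> cluster d \<omega>0 U x" by auto
    then have "cluster d \<omega>0 {w'} x \<in> \<T> w'"
      using cluster_of_member[of x ?L w' U] x unfolding \<T>_def by auto
    then show "x \<in> (\<Union>i\<in>I. Q i)"
      using w'(1) x unfolding I_def Q_def by blast
  qed
  have UN: "pair_weight summable_on (\<Union>i\<in>I. Q i) \<and> infsum pair_weight (\<Union>i\<in>I. Q i) \<le> (\<Sum>i\<in>I. infsum pair_weight (Q i))"
    by (rule infsum_UN_le[OF finI pair_weight_nonneg]) (rule Q_summable)
  have "infsum pair_weight {x \<in> ?C \<times> ?C. cluster d \<omega>0 U x \<inter> W \<noteq> {}} \<le> infsum pair_weight (\<Union>i\<in>I. Q i)"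
    using UN by (intro infsum_mono_set_nonneg[OF _ cover]) (auto simp: pair_weight_nonneg)
  also have "\<dots> \<le> (\<Sum>i\<in>I. infsum pair_weight (Q i))"
    using UN by blast
  also have "\<dots> \<le> (\<Sum>(w', T)\<in>I. ?Z\<^sup>2 * site_activity ^ card T)"
    by (rule sum_mono) (use infsum_cluster_eq_le[OF L] in \<open>auto simp: I_def \<T>_def Q_def mult.commute\<close>)
  also have "\<dots> = ?Z\<^sup>2 * (\<Sum>w'\<in>W. \<Sum>T\<in>\<T> w'. site_activity ^ card T)"
    unfolding I_def using W fin\<T> by (simp add: sum.Sigma[symmetric] sum_distrib_left)
  also have "\<dots> \<le> ?Z\<^sup>2 * (\<Sum>w'\<in>W. 2 * (1/2) ^ set_dist d W U)"
  proof (intro mult_left_mono sum_mono sum_connected_sets_le[OF site_activity_nonneg small])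
    fix w' T assume "w' \<in> W" "T \<in> \<T> w'"
    then obtain u where u: "u \<in> T" "u \<in> U" and T: "T \<subseteq> ?L" "connected_from d w' T"
      unfolding \<T>_def by auto
    have "set_dist d W U \<le> gdist d w' u" by (rule set_dist_le_gdist[OF W U \<open>w' \<in> W\<close> u(2)])
    also have "\<dots> \<le> 2 * card T"
      by (rule gdist_le_card_connected[OF finite_subset[OF T(1) L(2)] T(2) u(1)])
    finally show "T \<subseteq> ?L \<and> connected_from d w' T \<and> set_dist d W U \<le> 2 * card T" using T by simp
  qed simp
  finally show ?thesis by (simp add: mult_ac)
qed

lemma finite_volume_covariance_le:
  assumes "finite W" "finite U" "A \<in> F_sets d W" "B \<in> F_sets d U"
    and small: "site_activity \<le> (1/2) ^ (d + 4)"
  shows "\<bar>gibbs_prob d p \<beta> \<omega>0 (ball d n) (A \<inter> B) - gibbs_prob d p \<beta> \<omega>0 (ball d n) A * gibbs_prob d p \<beta> \<omega>0 (ball d n) B\<bar>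
     \<le> real (card W) * (2 * (1/2) ^ set_dist d W U)"
proof -
  let ?C = "Conf (ball d n)"
  let ?Z = "infsum w ?C"
  have L: "ball d n \<subseteq> tree_V d" "finite (ball d n)" using ball_subset_tree_V finite_ball by auto
  have Z: "?Z \<ge> 1" by (rule partition_function_ge_1[OF L])
  have "\<bar>infsum w (?C \<inter> (A \<inter> B)) * ?Z - infsum w (?C \<inter> A) * infsum w (?C \<inter> B)\<bar>
      \<le> real (card W) * (2 * (1/2) ^ set_dist d W U) * ?Z\<^sup>2"
    using covariance_le_cluster_hits[OF L assms(3,4)] infsum_cluster_hits_le[OF assms(1,2) small, of n]
    by linarith
  then show ?thesis
    using Z unfolding gibbs_prob_def
    by (simp add: field_simps power2_eq_square abs_div divide_le_eq)
qed

lemma covariance_le: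
  assumes small: "site_activity \<le> (1/2) ^ (d + 4)"
    and limit: "\<forall>W A. finite W \<and> W \<subseteq> tree_V d \<and> A \<in> F_sets d W \<longrightarrow>
        (\<lambda>n. gibbs_prob d p \<beta> \<omega>0 (ball d n) A) \<longlonglongrightarrow> measure \<mu> A"
    and W: "finite W" "W \<subseteq> tree_V d" and U: "finite U" "U \<subseteq> tree_V d"
    and A: "A \<in> F_sets d W" and B: "B \<in> F_sets d U"
  shows "\<bar>measure \<mu> (A \<inter> B) - measure \<mu> A * measure \<mu> B\<bar>
     \<le> exp (2 * real (card W) * exp (- ln 2 * real (set_dist d W U))) - 1"
proof -
  let ?P = "\<lambda>A n. gibbs_prob d p \<beta> \<omega>0 (ball d n) A"
  let ?K = "2 * real (card W) * exp (- ln 2 * real (set_dist d W U))"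
  have "(\<lambda>n. \<bar>?P (A \<inter> B) n - ?P A n * ?P B n\<bar>) \<longlonglongrightarrow> \<bar>measure \<mu> (A \<inter> B) - measure \<mu> A * measure \<mu> B\<bar>"
    using limit[rule_format, of "W \<union> U" "A \<inter> B"] limit[rule_format, of W A] limit[rule_format, of U B]
      W U A B F_sets_Int[OF A B] by (intro tendsto_intros) auto
  then have "\<bar>measure \<mu> (A \<inter> B) - measure \<mu> A * measure \<mu> B\<bar> \<le> real (card W) * (2 * (1/2) ^ set_dist d W U)"
    by (rule LIMSEQ_le_const2) (use finite_volume_covariance_le[OF W(1) U(1) A B small] in auto)
  also have "\<dots> = ?K"
  proof -
    have "exp (- ln 2 * real L) = (1/2::real) ^ L" for L
    proof -
      have "exp (- ln 2 * real L) = inverse (exp (real L * ln 2))"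
        by (simp add: exp_minus[symmetric] mult.commute)
      also have "exp (real L * ln 2) = 2 ^ L" by (simp add: exp_of_nat_mult)
      finally show ?thesis by (simp add: power_one_over inverse_eq_divide)
    qed
    then show ?thesis by simp
  qed
  also have "?K \<le> exp ?K - 1"
    using exp_ge_add_one_self[of ?K] by linarith
  finally show ?thesis .
qed

lemma correlation_decay:
  assumes small: "site_activity \<le> (1/2) ^ (d + 4)"
    and limit: "\<forall>W A. finite W \<and> W \<subseteq> tree_V d \<and> A \<in> F_sets d W \<longrightarrow>
        (\<lambda>n. gibbs_prob d p \<beta> \<omega>0 (ball d n) A) \<longlonglongrightarrow> measure \<mu> A"
  shows "\<exists>C > 0. \<exists>c > 0. \<forall>W U A B.
       finite W \<and> finite U \<and> W \<subseteq> tree_V d \<and> U \<subseteq> tree_V d \<and> W \<inter> U = {} \<and>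
       polymer_event d \<omega>0 W A \<and> polymer_event d \<omega>0 U B \<longrightarrow>
       \<bar>measure \<mu> (A \<inter> B) - measure \<mu> A * measure \<mu> B\<bar>
         \<le> exp (C * real (card W) * exp (- c * real (set_dist d W U))) - 1"
proof -
  have "\<forall>W U A B.
       finite W \<and> finite U \<and> W \<subseteq> tree_V d \<and> U \<subseteq> tree_V d \<and> W \<inter> U = {} \<and>
       polymer_event d \<omega>0 W A \<and> polymer_event d \<omega>0 U B \<longrightarrow>
       \<bar>measure \<mu> (A \<inter> B) - measure \<mu> A * measure \<mu> B\<bar>
         \<le> exp (2 * real (card W) * exp (- ln 2 * real (set_dist d W U))) - 1"
    using covariance_le[OF small limit] unfolding polymer_event_def by auto
  moreover have "(2::real) > 0" "ln 2 > (0::real)" by auto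
  ultimately show ?thesis by blast
qed

end

lemma threshold_ge_1:
  assumes "p > 0"
  shows "(infsum (site_weight p 1) UNIV)\<^sup>2 * 2 ^ (d + 4) \<ge> 1"
proof -
  have "1 \<le> (infsum (site_weight p 1) UNIV)\<^sup>2"
    using infsum_site_weight_ge_1[OF assms] by (simp add: one_le_power)
  moreover have "1 \<le> (2::real) ^ (d + 4)" by (simp add: one_le_power)
  ultimately show ?thesis
    using mult_mono[of 1 "(infsum (site_weight p 1) UNIV)\<^sup>2" 1 "(2::real) ^ (d + 4)"] by simp
qed

lemma site_activity_le_threshold:
  assumes "stable_ground_state d p \<eta> \<beta> \<omega>0"
    and "\<eta> \<ge> 1 + ln ((infsum (site_weight p 1) UNIV)\<^sup>2 * 2 ^ (d + 4))"
  shows "stable_ground_state.site_activity p \<eta> \<le> (1/2) ^ (d + 4)"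
proof -
  interpret stable_ground_state d p \<eta> \<beta> \<omega>0 by (rule assms(1))
  define M where "M = infsum (site_weight p 1) UNIV"
  have M: "M \<ge> 1" unfolding M_def by (rule infsum_site_weight_ge_1[OF p_pos])
  have K: "M\<^sup>2 * 2 ^ (d + 4) \<ge> 1" unfolding M_def by (rule threshold_ge_1[OF p_pos])
  have "site_activity \<le> exp (- (\<eta> - 1)) * M\<^sup>2"
    using site_activity_le unfolding M_def .
  also have "\<dots> \<le> exp (- ln (M\<^sup>2 * 2 ^ (d + 4))) * M\<^sup>2"
    using assms(2) unfolding M_def by (intro mult_right_mono) auto
  also have "\<dots> = (1/2) ^ (d + 4)"
    using K M by (simp add: exp_minus field_simps power_one_over)
  finally show ?thesis .
qed

theorem lemma5:
  fixes d :: nat and p :: real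
  assumes "d \<ge> 1" and "p > 0"
  shows "\<exists>\<eta>1::real. \<forall>\<eta> \<ge> \<eta>1. \<forall>(\<omega>0 :: nat list \<Rightarrow> int) (\<beta>::real) (\<mu> :: (nat list \<Rightarrow> int) measure).
    (\<omega>0 \<in> config_space d \<and> \<beta> > 0 \<and>
     (\<forall>\<omega> \<in> config_space d. finite {v. \<omega> v \<noteq> \<omega>0 v} \<longrightarrow>
        \<beta> * H_diff d p \<omega> \<omega>0 \<ge> \<eta> * (\<Sum>v\<in>{v. \<omega> v \<noteq> \<omega>0 v}. real_of_int \<bar>\<omega> v - \<omega>0 v\<bar> powr p)) \<and>
     prob_space \<mu> \<and> sets \<mu> = sets (config_M d) \<and>
     (\<forall>W A. finite W \<and> W \<subseteq> tree_V d \<and> A \<in> F_sets d W \<longrightarrow>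
        (\<lambda>n. gibbs_prob d p \<beta> \<omega>0 (ball d n) A) \<longlonglongrightarrow> measure \<mu> A))
    \<longrightarrow>
    (\<exists>C > 0. \<exists>c > 0. \<forall>W U A B.
       finite W \<and> finite U \<and> W \<subseteq> tree_V d \<and> U \<subseteq> tree_V d \<and> W \<inter> U = {} \<and>
       polymer_event d \<omega>0 W A \<and> polymer_event d \<omega>0 U B \<longrightarrow>
       \<bar>measure \<mu> (A \<inter> B) - measure \<mu> A * measure \<mu> B\<bar>
         \<le> exp (C * real (card W) * exp (- c * real (set_dist d W U))) - 1)"
proof -
  define \<eta>1 where "\<eta>1 = 1 + ln ((infsum (site_weight p 1) UNIV)\<^sup>2 * 2 ^ (d + 4))"
  have "\<eta>1 \<ge> 1"
    unfolding \<eta>1_def using threshold_ge_1[OF assms(2), of d] by simp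
  show ?thesis
  proof (rule exI[of _ \<eta>1], intro allI impI, elim conjE, goal_cases)
    case (1 \<eta> \<omega>0 \<beta> \<mu>)
    then interpret stable_ground_state d p \<eta> \<beta> \<omega>0
      using assms(2) \<open>\<eta>1 \<ge> 1\<close> by unfold_locales auto
    have "site_activity \<le> (1/2) ^ (d + 4)"
      using site_activity_le_threshold[OF stable_ground_state_axioms] 1(1) unfolding \<eta>1_def .
    then show ?case by (rule correlation_decay) (use 1 in blast)
  qed
qed

end
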